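(* Let $\mu,\nu$ be arbitrary macro states. There is a function $w_{\mu\nu}:\mathbb{R}\to[0,1]$ (one may take $w_{\mu\nu}(t)=\frac{1}{d_\mu}\operatorname{tr}\bigl[P_\mu e^{iHt}P_\nu e^{-iHt}\bigr]$) such that: (i) for every $t\in\mathbb{R}$ and every $\varepsilon>0$, for $(1-\varepsilon)$-most $\psi_0\in\mathbb{S}(\mathcal{H}_\mu)$, $$\Bigl|\|P_\nu\psi_t\|^2-w_{\mu\nu}(t)\Bigr|\le \frac{1}{\sqrt{\varepsilon d_\mu}};$$ (ii) for every $T>0$ and every $\varepsilon>0$, for $(1-\varepsilon)$-most $\psi_0\in\mathbb{S}(\mathcal{H}_\mu)$, $$\frac1T\int_0^T\Bigl|\|P_\nu\psi_t\|^2-w_{\mu\nu}(t)\Bigr|^2\,dt\le\frac{1}{\varepsilon d_\mu}.$$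
   Context: $\mathcal{H}$ is a finite-dimensional complex Hilbert space of dimension $D$ with an orthogonal decomposition $\mathcal{H}=\bigoplus_\nu\mathcal{H}_\nu$ into nonzero subspaces ("macro spaces", indexed by "macro states" $\nu$); $P_\nu$ is the orthogonal projection onto $\mathcal{H}_\nu$ and $d_\nu=\dim\mathcal{H}_\nu$. $H$ is a self-adjoint operator (Hamiltonian) on $\mathcal{H}$ and $\psi_t=e^{-iHt}\psi_0$. $\mathbb{S}(\mathcal{H}_\mu)$ is the unit sphere of $\mathcal{H}_\mu$ and $u_\mu$ the normalized uniform (rotation-invariant) probability measure on it. A statement $s(\psi)$ holds for "$(1-\varepsilon)$-most $\psi\in\mathbb{S}(\mathcal{H}_\mu)$" if $u_\mu(\{\psi: s(\psi)\})\ge1-\varepsilon$. *)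

theory Defs
  imports "HOL-Analysis.Analysis" "HOL-Probability.Probability"
begin

text \<open>The Hilbert space is \<open>complex^'n\<close> (dimension D = CARD('n)), with the standard
  inner product; its norm is the library norm on \<open>complex^'n\<close>.\<close>

definition cadj :: "complex^'n^'n \<Rightarrow> complex^'n^'n" where
  "cadj A = (\<chi> i j. cnj (A $ j $ i))"

definition self_adjoint :: "complex^'n^'n \<Rightarrow> bool" where
  "self_adjoint A \<longleftrightarrow> cadj A = A"

definition unitary :: "complex^'n^'n \<Rightarrow> bool" where
  "unitary U \<longleftrightarrow> cadj U ** U = mat 1"

fun matpow :: "complex^'n^'n \<Rightarrow> nat \<Rightarrow> complex^'n^'n" where
  "matpow A 0 = mat 1"
| "matpow A (Suc k) = A ** matpow A k"

definition cexpm :: "complex \<Rightarrow> complex^'n^'n \<Rightarrow> complex^'n^'n" where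
  "cexpm z A = (\<chi> i j. (\<Sum>k. (z ^ k / of_nat (fact k)) * (matpow A k $ i $ j)))"

definition evol :: "complex^'n^'n \<Rightarrow> real \<Rightarrow> complex^'n \<Rightarrow> complex^'n" where
  "evol H t \<psi>0 = cexpm (- \<i> * of_real t) H *v \<psi>0"

definition macro_decomposition :: "'m set \<Rightarrow> ('m \<Rightarrow> complex^'n^'n) \<Rightarrow> bool" where
  "macro_decomposition Ms P \<longleftrightarrow>
     finite Ms \<and>
     (\<forall>\<nu>\<in>Ms. P \<nu> ** P \<nu> = P \<nu> \<and> cadj (P \<nu>) = P \<nu> \<and> P \<nu> \<noteq> 0) \<and>
     (\<forall>\<nu>\<in>Ms. \<forall>\<nu>'\<in>Ms. \<nu> \<noteq> \<nu>' \<longrightarrow> P \<nu> ** P \<nu>' = 0) \<and>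
     (\<Sum>\<nu>\<in>Ms. P \<nu>) = mat 1"

definition subsp :: "complex^'n^'n \<Rightarrow> (complex^'n) set" where
  "subsp P = range (\<lambda>x. P *v x)"

definition cdim :: "(complex^'n) set \<Rightarrow> nat" where
  "cdim S = vec.dim S"

definition unit_sphere_of :: "(complex^'n) set \<Rightarrow> (complex^'n) set" where
  "unit_sphere_of S = {\<psi> \<in> S. norm \<psi> = 1}"

text \<open>\<open>u\<close> is the normalized uniform (rotation-invariant) probability measure on the unit
  sphere of the subspace \<open>S\<close>: a Borel probability measure on that sphere invariant under
  every unitary of the whole space that maps \<open>S\<close> into itself (these restrict to exactly
  the unitaries of \<open>S\<close>). Such a measure is unique.\<close>
definition uniform_sphere_measure :: "(complex^'n) set \<Rightarrow> (complex^'n) measure \<Rightarrow> bool" where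
  "uniform_sphere_measure S u \<longleftrightarrow>
     prob_space u \<and>
     space u = unit_sphere_of S \<and>
     sets u = sets (restrict_space borel (unit_sphere_of S)) \<and>
     (\<forall>U. unitary U \<and> (\<forall>x\<in>S. U *v x \<in> S) \<longrightarrow> distr u u (\<lambda>x. U *v x) = u)"

definition most :: "(complex^'n) measure \<Rightarrow> real \<Rightarrow> (complex^'n \<Rightarrow> bool) \<Rightarrow> bool" where
  "most u \<epsilon> s \<longleftrightarrow> {\<psi> \<in> space u. s \<psi>} \<in> sets u \<and> measure u {\<psi> \<in> space u. s \<psi>} \<ge> 1 - \<epsilon>"

definition wfun :: "complex^'n^'n \<Rightarrow> complex^'n^'n \<Rightarrow> complex^'n^'n \<Rightarrow> real \<Rightarrow> real" where
  "wfun H P\<mu> P\<nu> t = Re (trace (P\<mu> ** cexpm (\<i> * of_real t) H ** P\<nu> ** cexpm (- \<i> * of_real t) H))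
                        / real (cdim (subsp P\<mu>))"

end

theory Submission
  imports Defs
begin

text \<open>Write \<open>\<parallel>P\<^sub>\<nu> \<psi>\<^sub>t\<parallel>\<^sup>2 = \<langle>\<psi>\<^sub>0, B\<^sub>t \<psi>\<^sub>0\<rangle>\<close> with the Heisenberg-picture operator
  \<open>B\<^sub>t = e\<^sup>i\<^sup>H\<^sup>t P\<^sub>\<nu> e\<^sup>-\<^sup>i\<^sup>H\<^sup>t\<close>, a self-adjoint contraction. Expand \<open>\<psi>\<^sub>0\<close> in an orthonormal basis
  of \<open>\<H>\<^sub>\<mu>\<close>. Invariance of the uniform measure under unitaries of \<open>\<H>\<^sub>\<mu>\<close> determines the
  second and fourth moments of the coordinates: diagonal phase rotations kill every moment
  that is not of the form \<open>\<bar>c\<^sub>k\<bar>\<^sup>2\<close> or \<open>\<bar>c\<^sub>k\<bar>\<^sup>2\<bar>c\<^sub>p\<bar>\<^sup>2\<close>, permutations make these independent of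
  the indices, a Hadamard rotation gives \<open>E\<bar>c\<^sub>0\<bar>\<^sup>4 = 2 E\<bar>c\<^sub>0\<bar>\<^sup>2\<bar>c\<^sub>1\<bar>\<^sup>2\<close>, and \<open>\<Sum>\<bar>c\<^sub>k\<bar>\<^sup>2 = 1\<close> fixes
  the normalisation. Consequently \<open>\<langle>\<psi>\<^sub>0, B \<psi>\<^sub>0\<rangle>\<close> has mean \<open>tr(P\<^sub>\<mu> B)/d\<^sub>\<mu>\<close> and variance at
  most \<open>1/(d\<^sub>\<mu>+1)\<close>, and Chebyshev's inequality gives (i). For (ii), exchanging time average and
  expectation bounds the expected time-averaged squared deviation by the same \<open>1/(d\<^sub>\<mu>+1)\<close>,
  and Markov's inequality applies; the exchange is elementary because the integrand is a finite
  sum of products of a continuous function of \<open>t\<close> and a continuous function of \<open>\<psi>\<^sub>0\<close>.\<close>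

section \<open>Complex inner product and adjoint\<close>

definition cinner :: "complex^'n \<Rightarrow> complex^'n \<Rightarrow> complex" where
  "cinner x y = (\<Sum>i\<in>UNIV. cnj (x$i) * y$i)"

lemma cinner_adj: "cinner x (A *v y) = cinner (cadj A *v x) y"
proof -
  have "cinner x (A *v y) = (\<Sum>i\<in>UNIV. \<Sum>j\<in>UNIV. cnj (x$i) * A$i$j * y$j)"
    unfolding cinner_def matrix_vector_mult_def by (simp add: sum_distrib_left mult_ac)
  also have "\<dots> = (\<Sum>j\<in>UNIV. \<Sum>i\<in>UNIV. cnj (x$i) * A$i$j * y$j)"
    by (rule sum.swap)
  also have "\<dots> = cinner (cadj A *v x) y"
    unfolding cinner_def matrix_vector_mult_def cadj_def
    by (simp add: sum_distrib_right sum_distrib_left mult_ac)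
  finally show ?thesis .
qed

lemma cinner_add_right: "cinner x (y + z) = cinner x y + cinner x z"
  unfolding cinner_def by (simp add: distrib_left sum.distrib)

lemma cinner_add_left: "cinner (x + y) z = cinner x z + cinner y z"
  unfolding cinner_def by (simp add: distrib_right sum.distrib)

lemma cinner_diff_right: "cinner x (y - z) = cinner x y - cinner x z"
  unfolding cinner_def by (simp add: right_diff_distrib sum_subtractf)

lemma cinner_scale_right: "cinner x (c *s y) = c * cinner x y"
  unfolding cinner_def by (simp add: sum_distrib_left mult_ac)

lemma cinner_scale_left: "cinner (c *s x) y = cnj c * cinner x y"
  unfolding cinner_def by (simp add: sum_distrib_left mult_ac)

lemma cinner_sum_right: "cinner x (\<Sum>k\<in>K. f k) = (\<Sum>k\<in>K. cinner x (f k))"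
  unfolding cinner_def by (simp add: sum_distrib_left sum.swap[of _ UNIV K])

lemma cinner_sum_left: "cinner (\<Sum>k\<in>K. f k) y = (\<Sum>k\<in>K. cinner (f k) y)"
  unfolding cinner_def by (simp add: sum_distrib_right sum.swap[of _ UNIV K])

lemma cinner_zero_right [simp]: "cinner x 0 = 0"
  unfolding cinner_def by simp

lemma cinner_cnj: "cnj (cinner x y) = cinner y x"
  unfolding cinner_def by (simp add: mult_ac)

lemma norm_vec_sq: "(norm (x::complex^'n))\<^sup>2 = (\<Sum>i\<in>UNIV. (cmod (x$i))\<^sup>2)"
  unfolding norm_vec_def L2_set_def by (simp add: sum_nonneg)

lemma cinner_self: "cinner x x = of_real ((norm x)\<^sup>2)"
  unfolding cinner_def norm_vec_sq of_real_sum
  by (intro sum.cong refl) (metis complex_norm_square mult.commute of_real_power)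

lemma continuous_on_cinner [continuous_intros]:
  "continuous_on S f \<Longrightarrow> continuous_on S (\<lambda>x. cinner a (f x))"
  unfolding cinner_def by (intro continuous_intros)

lemma continuous_on_quadratic_form [continuous_intros]:
  "continuous_on S (\<lambda>x. cinner x (B *v x))"
  unfolding cinner_def matrix_vector_mult_def by (intro continuous_intros)

lemma cadj_mult: "cadj (A ** B) = cadj B ** cadj A"
  unfolding cadj_def matrix_matrix_mult_def by (simp add: vec_eq_iff mult_ac)

lemma cadj_cadj [simp]: "cadj (cadj A) = A"
  unfolding cadj_def by (simp add: vec_eq_iff)

lemma cinner_axis_left: "cinner (axis i 1) z = z $ i"
proof -
  have "cnj (axis i 1 $ j) * z $ j = (if j = i then z $ i else 0)" for j
    by (simp add: axis_def)
  then show ?thesis unfolding cinner_def by simp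
qed

lemma matrix_vector_mult_axis: "((M::complex^'n^'n) *v axis j 1) $ i = M $ i $ j"
proof -
  have "M $ i $ k * axis j 1 $ k = (if k = j then M $ i $ j else 0)" for k
    by (simp add: axis_def)
  then show ?thesis unfolding matrix_vector_mult_def by simp
qed

lemma unitary_if_preserves_cinner:
  assumes "\<And>x y. cinner (A *v x) (A *v y) = cinner x y"
  shows "unitary A"
proof -
  have "(cadj A ** A) $ i $ j = mat 1 $ i $ j" for i j
  proof -
    have "cinner (axis i 1) ((cadj A ** A) *v axis j 1) = cinner (axis i 1) (axis j 1)"
      using assms[of "axis i 1" "axis j 1"]
      by (metis cadj_cadj cinner_adj matrix_vector_mul_assoc)
    then have "((cadj A ** A) *v axis j 1) $ i = axis j 1 $ i"
      by (simp only: cinner_axis_left)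
    then show ?thesis unfolding matrix_vector_mult_axis by (simp add: mat_def axis_def)
  qed
  then show ?thesis unfolding unitary_def by (simp add: vec_eq_iff)
qed

lemma unitary_norm_preserving:
  assumes "unitary U" shows "norm (U *v x) = norm x"
proof -
  have "cinner (U *v x) (U *v x) = cinner x x"
    using assms unfolding unitary_def
    by (metis cinner_adj matrix_vector_mul_assoc matrix_vector_mul_lid)
  then have "(norm (U *v x))\<^sup>2 = (norm x)\<^sup>2" unfolding cinner_self of_real_eq_iff .
  then show ?thesis by (simp add: power2_eq_iff_nonneg)
qed

section \<open>The matrix exponential\<close>

lemma matpow_add: "matpow A (k + l) = matpow A k ** matpow A l"
  by (induction k) (simp_all add: matrix_mul_lid matrix_mul_assoc)

lemma matpow_commute: "A ** matpow A k = matpow A k ** A"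
  using matpow_add[of A k 1] matpow_add[of A 1 k] by (simp add: matrix_mul_rid add.commute)

definition entry_bound :: "complex^'n^'n \<Rightarrow> real" where
  "entry_bound A = 1 + (\<Sum>i\<in>UNIV. \<Sum>j\<in>UNIV. norm (A$i$j))"

lemma row_sum_le_entry_bound: "(\<Sum>m\<in>UNIV. norm (A$i$m)) \<le> entry_bound A"
proof -
  have "(\<Sum>m\<in>UNIV. norm (A$i$m)) \<le> (\<Sum>i\<in>UNIV. \<Sum>j\<in>UNIV. norm (A$i$j))"
    by (rule member_le_sum[of i UNIV "\<lambda>i. \<Sum>j\<in>UNIV. norm (A$i$j)"]) (auto intro: sum_nonneg)
  then show ?thesis unfolding entry_bound_def by simp
qed

lemma entry_bound_pos: "0 < entry_bound A"
  unfolding entry_bound_def by (smt (verit) norm_ge_zero sum_nonneg)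

lemma norm_matpow_entry_le: "norm (matpow A k $ i $ j) \<le> entry_bound A ^ k"
proof (induction k arbitrary: i j)
  case 0
  then show ?case by (simp add: mat_def)
next
  case (Suc k)
  have "norm (matpow A (Suc k) $ i $ j) = norm (\<Sum>m\<in>UNIV. A$i$m * matpow A k $ m $ j)"
    by (simp add: matrix_matrix_mult_def)
  also have "\<dots> \<le> (\<Sum>m\<in>UNIV. norm (A$i$m) * entry_bound A ^ k)"
    by (rule order_trans[OF norm_sum sum_mono]) (simp add: norm_mult Suc mult_left_mono)
  also have "\<dots> = (\<Sum>m\<in>UNIV. norm (A$i$m)) * entry_bound A ^ k"
    by (simp add: sum_distrib_right)
  also have "\<dots> \<le> entry_bound A * entry_bound A ^ k"
    by (rule mult_right_mono[OF row_sum_le_entry_bound]) (use entry_bound_pos[of A] in simp)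
  finally show ?case by simp
qed

lemma norm_cexpm_term_le:
  "norm (z ^ k / of_nat (fact k) * (matpow A k $ i $ j))
     \<le> inverse (fact k) * (norm z * entry_bound A) ^ k"
proof -
  have "norm (z ^ k / of_nat (fact k) * (matpow A k $ i $ j)) =
          norm z ^ k / fact k * norm (matpow A k $ i $ j)"
    by (simp add: norm_mult norm_divide norm_power)
  also have "\<dots> \<le> norm z ^ k / fact k * entry_bound A ^ k"
    by (rule mult_left_mono[OF norm_matpow_entry_le]) simp
  finally show ?thesis by (simp add: power_mult_distrib divide_inverse mult_ac)
qed

lemma summable_norm_cexpm_series:
  "summable (\<lambda>k. norm (z ^ k / of_nat (fact k) * (matpow A k $ i $ j)))"
  by (rule summable_comparison_test[OF _ summable_exp[of "norm z * entry_bound A"]])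
     (intro exI[of _ 0] allI impI, simp only: real_norm_def abs_norm_cancel norm_cexpm_term_le)

lemma summable_cexpm_series:
  "summable (\<lambda>k. z ^ k / of_nat (fact k) * (matpow A k $ i $ j))"
  using summable_norm_cancel[OF summable_norm_cexpm_series] .

lemma cexpm_entry: "cexpm z A $ i $ j = (\<Sum>k. z ^ k / of_nat (fact k) * (matpow A k $ i $ j))"
  unfolding cexpm_def by simp

lemma cexpm_zero: "cexpm 0 A = mat 1"
proof -
  have "cexpm 0 A $ i $ j = mat 1 $ i $ j" for i j
  proof -
    have "cexpm 0 A $ i $ j = (\<Sum>k. (matpow A k $ i $ j / of_nat (fact k)) * 0 ^ k)"
      unfolding cexpm_entry by (intro suminf_cong) (simp add: mult_ac)
    also have "\<dots> = mat 1 $ i $ j" by (subst powser_zero) simp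
    finally show ?thesis .
  qed
  then show ?thesis by (simp add: vec_eq_iff)
qed

lemma binomial_sum_over_fact:
  fixes z w :: complex
  shows "(\<Sum>k\<le>n. z ^ k / of_nat (fact k) * (w ^ (n - k) / of_nat (fact (n - k))))
        = (z + w) ^ n / of_nat (fact n)"
proof -
  have "(z + w) ^ n = (\<Sum>k\<le>n. of_nat (n choose k) * z ^ k * w ^ (n - k))"
    by (rule binomial_ring)
  also have "\<dots> = (\<Sum>k\<le>n. of_nat (fact n) *
                     (z ^ k / of_nat (fact k) * (w ^ (n - k) / of_nat (fact (n - k)))))"
  proof (intro sum.cong refl)
    fix k assume "k \<in> {..n}"
    then have "(of_nat (n choose k) :: complex) =
                 of_nat (fact n) / (of_nat (fact k) * of_nat (fact (n - k)))"
      using binomial_fact[of k n] by simp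
    then show "of_nat (n choose k) * z ^ k * w ^ (n - k) =
      of_nat (fact n) * (z ^ k / of_nat (fact k) * (w ^ (n - k) / of_nat (fact (n - k))))"
      by (simp add: field_simps)
  qed
  also have "\<dots> = of_nat (fact n) * (\<Sum>k\<le>n. z ^ k / of_nat (fact k) * (w ^ (n - k) / of_nat (fact (n - k))))"
    by (simp add: sum_distrib_left)
  finally show ?thesis by (simp add: field_simps)
qed

lemma cexpm_add: "cexpm z A ** cexpm w A = cexpm (z + w) A"
proof -
  have "(cexpm z A ** cexpm w A) $ i $ j = cexpm (z + w) A $ i $ j" for i j
  proof -
    define a where "a = (\<lambda>m k. z ^ k / of_nat (fact k) * (matpow A k $ i $ m))"
    define b where "b = (\<lambda>m k. w ^ k / of_nat (fact k) * (matpow A k $ m $ j))"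
    have "(cexpm z A ** cexpm w A) $ i $ j = (\<Sum>m\<in>UNIV. (\<Sum>k. a m k) * (\<Sum>k. b m k))"
      by (simp add: matrix_matrix_mult_def cexpm_entry a_def b_def)
    also have "\<dots> = (\<Sum>m\<in>UNIV. \<Sum>n. \<Sum>k\<le>n. a m k * b m (n - k))"
      unfolding a_def b_def by (intro sum.cong refl Cauchy_product summable_norm_cexpm_series)
    also have "\<dots> = (\<Sum>n. \<Sum>m\<in>UNIV. \<Sum>k\<le>n. a m k * b m (n - k))"
      unfolding a_def b_def
      by (intro suminf_sum[symmetric] summable_Cauchy_product summable_norm_cexpm_series)
    also have "\<dots> = (\<Sum>n. (z + w) ^ n / of_nat (fact n) * (matpow A n $ i $ j))"
    proof (intro suminf_cong)
      fix n
      have split: "(\<Sum>m\<in>UNIV. matpow A k $ i $ m * matpow A (n - k) $ m $ j) = matpow A n $ i $ j"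
        if "k \<le> n" for k
        using matpow_add[of A k "n - k"] that by (simp add: matrix_matrix_mult_def)
      have "(\<Sum>m\<in>UNIV. \<Sum>k\<le>n. a m k * b m (n - k))
          = (\<Sum>k\<le>n. (z ^ k / of_nat (fact k) * (w ^ (n - k) / of_nat (fact (n - k)))) *
                (\<Sum>m\<in>UNIV. matpow A k $ i $ m * matpow A (n - k) $ m $ j))"
        by (subst sum.swap) (simp add: a_def b_def sum_distrib_left mult_ac)
      also have "\<dots> = (\<Sum>k\<le>n. z ^ k / of_nat (fact k) * (w ^ (n - k) / of_nat (fact (n - k)))) *
                         (matpow A n $ i $ j)"
        by (simp add: split sum_distrib_right)
      also have "\<dots> = (z + w) ^ n / of_nat (fact n) * (matpow A n $ i $ j)"
        by (simp only: binomial_sum_over_fact)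
      finally show "(\<Sum>m\<in>UNIV. \<Sum>k\<le>n. a m k * b m (n - k)) =
                    (z + w) ^ n / of_nat (fact n) * (matpow A n $ i $ j)" .
    qed
    also have "\<dots> = cexpm (z + w) A $ i $ j" by (simp add: cexpm_entry)
    finally show ?thesis .
  qed
  then show ?thesis by (simp add: vec_eq_iff)
qed

lemma cadj_matpow:
  assumes "cadj A = A" shows "cadj (matpow A k) = matpow A k"
proof (induction k)
  case 0
  then show ?case by (simp add: cadj_def mat_def vec_eq_iff)
next
  case (Suc k)
  then have "cadj (matpow A (Suc k)) = matpow A k ** A" using assms by (simp add: cadj_mult)
  then show ?case by (simp add: matpow_commute)
qed

lemma cadj_cexpm:
  assumes "self_adjoint A" shows "cadj (cexpm z A) = cexpm (cnj z) A"
proof -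
  have sa: "cadj A = A" using assms unfolding self_adjoint_def .
  have "cadj (cexpm z A) $ i $ j = cexpm (cnj z) A $ i $ j" for i j
  proof -
    have "cadj (cexpm z A) $ i $ j = cnj (\<Sum>k. z ^ k / of_nat (fact k) * (matpow A k $ j $ i))"
      by (simp add: cadj_def cexpm_entry)
    also have "\<dots> = (\<Sum>k. cnj (z ^ k / of_nat (fact k) * (matpow A k $ j $ i)))"
      by (rule sums_unique[OF sums_cnj[THEN iffD2, OF summable_sums[OF summable_cexpm_series]]])
    also have "\<dots> = (\<Sum>k. cnj z ^ k / of_nat (fact k) * (matpow A k $ i $ j))"
    proof (intro suminf_cong)
      fix k
      have "cnj (matpow A k $ j $ i) = matpow A k $ i $ j"
        using arg_cong[OF cadj_matpow[OF sa, of k], of "\<lambda>B. B $ i $ j"] by (simp add: cadj_def)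
      then show "cnj (z ^ k / of_nat (fact k) * (matpow A k $ j $ i)) =
                 cnj z ^ k / of_nat (fact k) * (matpow A k $ i $ j)"
        by simp
    qed
    finally show ?thesis by (simp add: cexpm_entry)
  qed
  then show ?thesis by (simp add: vec_eq_iff)
qed

lemma unitary_cexpm_imaginary:
  assumes "self_adjoint H" shows "unitary (cexpm (- \<i> * of_real t) H)"
  unfolding unitary_def cadj_cexpm[OF assms] cexpm_add by (simp add: cexpm_zero)

lemma isCont_cexpm_entry: "isCont (\<lambda>z. cexpm z A $ i $ j) z"
proof -
  have eq: "(\<lambda>z. cexpm z A $ i $ j) = (\<lambda>z. \<Sum>k. (matpow A k $ i $ j / of_nat (fact k)) * z ^ k)"
    by (rule ext) (simp add: cexpm_entry mult_ac)
  show ?thesis unfolding eq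
  proof (rule isCont_powser_converges_everywhere)
    fix y :: complex
    have "(\<lambda>n. (matpow A n $ i $ j / of_nat (fact n)) * y ^ n) = (\<lambda>k. y ^ k / of_nat (fact k) * (matpow A k $ i $ j))"
      by (rule ext) (simp add: field_simps)
    then show "summable (\<lambda>n. (matpow A n $ i $ j / of_nat (fact n)) * y ^ n)"
      using summable_cexpm_series[of y A i j] by simp
  qed
qed


definition continuous_matrix_fun :: "(real \<Rightarrow> complex^'n^'n) \<Rightarrow> bool" where
  "continuous_matrix_fun A \<longleftrightarrow> (\<forall>i j. continuous_on UNIV (\<lambda>t. A t $ i $ j))"

lemma continuous_matrix_fun_const: "continuous_matrix_fun (\<lambda>t. A)"
  unfolding continuous_matrix_fun_def by simp

lemma continuous_matrix_fun_mult:
  "continuous_matrix_fun A \<Longrightarrow> continuous_matrix_fun B \<Longrightarrow> continuous_matrix_fun (\<lambda>t. A t ** B t)"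
  unfolding continuous_matrix_fun_def matrix_matrix_mult_def
  by (simp add: continuous_on_sum continuous_on_mult)

lemma continuous_matrix_fun_cexpm: "continuous_matrix_fun (\<lambda>t. cexpm (c * of_real t) A)"
proof -
  have "continuous_on UNIV ((\<lambda>z. cexpm z A $ i $ j) \<circ> (\<lambda>t::real. c * of_real t))" for i j
    by (intro continuous_on_compose continuous_intros continuous_at_imp_continuous_on ballI
        isCont_cexpm_entry)
  then show ?thesis unfolding continuous_matrix_fun_def o_def by blast
qed

lemma continuous_on_trace:
  "continuous_matrix_fun A \<Longrightarrow> continuous_on UNIV (\<lambda>t. trace (A t))"
  unfolding continuous_matrix_fun_def trace_def by (simp add: continuous_on_sum)

section \<open>Orthonormal bases\<close>

definition orthonormal_upto :: "(nat \<Rightarrow> complex^'n) \<Rightarrow> nat \<Rightarrow> bool" where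
  "orthonormal_upto e m \<longleftrightarrow> (\<forall>k<m. \<forall>l<m. cinner (e k) (e l) = (if k = l then 1 else 0))"

lemma orthonormal_upto_inj:
  assumes "orthonormal_upto e m" shows "inj_on e {..<m}"
proof (rule inj_onI)
  fix k l assume "k \<in> {..<m}" "l \<in> {..<m}" "e k = e l"
  then show "k = l" using assms unfolding orthonormal_upto_def
    by (metis (no_types, lifting) lessThan_iff one_neq_zero)
qed

lemma cinner_orthonormal_expansion:
  assumes "orthonormal_upto e m" "j < m"
  shows "cinner (e j) (\<Sum>k<m. c k *s e k) = c j"
proof -
  have "cinner (e j) (\<Sum>k<m. c k *s e k) = (\<Sum>k<m. c k * (if j = k then 1 else 0))"
    using assms unfolding orthonormal_upto_def by (simp add: cinner_sum_right cinner_scale_right)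
  also have "\<dots> = (\<Sum>k<m. if j = k then c k else 0)" by (intro sum.cong) auto
  also have "\<dots> = c j" using assms(2) by (simp add: sum.delta)
  finally show ?thesis .
qed

lemma orthonormal_upto_independent:
  assumes "orthonormal_upto e m" shows "vec.independent (e ` {..<m})"
proof
  assume dep: "vec.dependent (e ` {..<m})"
  obtain u where u: "\<exists>v\<in>e ` {..<m}. u v \<noteq> 0" "(\<Sum>v\<in>e ` {..<m}. u v *s v) = 0"
    using vec.dependent_finite[THEN iffD1, OF _ dep] by auto
  have "(\<Sum>k<m. u (e k) *s e k) = 0"
    using u(2) sum.reindex[OF orthonormal_upto_inj[OF assms], of "\<lambda>v. u v *s v"] by simp
  then have "u (e j) = 0" if "j < m" for j
    using cinner_orthonormal_expansion[OF assms that, of "\<lambda>k. u (e k)"] by simp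
  then show False using u(1) by auto
qed

lemma card_orthonormal_upto:
  assumes "orthonormal_upto e m" shows "card (e ` {..<m}) = m"
  using card_image[OF orthonormal_upto_inj[OF assms]] by simp

lemma orthonormal_upto_length_le_dim:
  fixes e :: "nat \<Rightarrow> complex^'n"
  assumes "orthonormal_upto e m" shows "m \<le> vec.dim (UNIV :: (complex^'n) set)"
  using vec.independent_card_le_dim[of "e ` {..<m}" UNIV] orthonormal_upto_independent[OF assms]
    card_orthonormal_upto[OF assms]
  by simp

text \<open>A maximal orthonormal family in \<open>S\<close> spans \<open>S\<close>: otherwise Gram--Schmidt applied to a
  vector of \<open>S\<close> outside its span would extend it.\<close>

lemma orthonormal_basis_exists:
  fixes S :: "(complex^'n) set"
  assumes sub: "vec.subspace S"
  obtains e m where "\<forall>k<m. e k \<in> S" "orthonormal_upto e m"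
    "\<forall>x\<in>S. x = (\<Sum>k<m. cinner (e k) x *s e k)"
proof -
  define G where "G = {m. \<exists>e::nat \<Rightarrow> complex^'n. (\<forall>k<m. e k \<in> S) \<and> orthonormal_upto e m}"
  have G0: "0 \<in> G" unfolding G_def orthonormal_upto_def by auto
  have "G \<subseteq> {..vec.dim (UNIV :: (complex^'n) set)}"
    unfolding G_def using orthonormal_upto_length_le_dim by auto
  then have finG: "finite G" using finite_subset by blast
  define m where "m = Max G"
  have "m \<in> G" unfolding m_def using G0 finG Max_in by blast
  then obtain e where eS: "\<forall>k<m. e k \<in> S" and eON: "orthonormal_upto e m" unfolding G_def by blast
  have "x = (\<Sum>k<m. cinner (e k) x *s e k)" if xS: "x \<in> S" for x
  proof (rule ccontr)
    define y where "y = x - (\<Sum>k<m. cinner (e k) x *s e k)"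
    assume "x \<noteq> (\<Sum>k<m. cinner (e k) x *s e k)"
    then have npos: "norm y > 0" unfolding y_def by simp
    have yS: "y \<in> S" unfolding y_def
      by (intro vec.subspace_diff[OF sub xS] vec.subspace_sum[OF sub] vec.subspace_scale[OF sub])
         (use eS in auto)
    define y1 where "y1 = of_real (1 / norm y) *s y"
    have y1y1: "cinner y1 y1 = 1"
      unfolding y1_def cinner_scale_left cinner_scale_right unfolding cinner_self
      using npos by (simp add: power2_eq_square field_simps)
    have y1e: "cinner (e k) y1 = 0" if "k < m" for k
      unfolding y1_def y_def cinner_scale_right cinner_diff_right
        cinner_orthonormal_expansion[OF eON that] by simp
    have e_y1: "cinner y1 (e k) = 0" if "k < m" for k
      using y1e[OF that] cinner_cnj by (metis complex_cnj_zero)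
    have "orthonormal_upto (e(m := y1)) (Suc m)"
      unfolding orthonormal_upto_def
    proof (intro allI impI)
      fix k l assume "k < Suc m" "l < Suc m"
      then show "cinner ((e(m := y1)) k) ((e(m := y1)) l) = (if k = l then 1 else 0)"
        using eON y1y1 y1e e_y1 unfolding orthonormal_upto_def
        by (cases "k = m"; cases "l = m") (auto simp: less_Suc_eq)
    qed
    moreover have "\<forall>k<Suc m. (e(m := y1)) k \<in> S"
      unfolding y1_def using eS vec.subspace_scale[OF sub yS] by (auto simp: less_Suc_eq)
    ultimately have "Suc m \<in> G" unfolding G_def by blast
    then have "Suc m \<le> m" unfolding m_def using finG by (simp add: Max_ge)
    then show False by simp
  qed
  then show thesis using that eS eON by blast
qed

lemma dim_eq_orthonormal_basis_length:
  assumes "\<forall>k<m. e k \<in> S" "orthonormal_upto e m" "\<forall>x\<in>S. x = (\<Sum>k<m. cinner (e k) x *s e k)"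
  shows "vec.dim S = m"
proof (rule vec.dim_unique[of "e ` {..<m}"])
  show "e ` {..<m} \<subseteq> S" using assms(1) by auto
  show "S \<subseteq> vec.span (e ` {..<m})"
  proof
    fix x assume "x \<in> S"
    then have "x = (\<Sum>k<m. cinner (e k) x *s e k)" using assms(3) by auto
    also have "\<dots> \<in> vec.span (e ` {..<m})"
      by (intro vec.span_sum vec.span_scale vec.span_base) auto
    finally show "x \<in> vec.span (e ` {..<m})" .
  qed
  show "vec.independent (e ` {..<m})" by (rule orthonormal_upto_independent[OF assms(2)])
  show "card (e ` {..<m}) = m" by (rule card_orthonormal_upto[OF assms(2)])
qed

section \<open>Orthogonal projections\<close>

locale projection =
  fixes P :: "complex^'n^'n"
  assumes idem: "P ** P = P" and self_adj: "cadj P = P"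
begin

lemma proj_idem_apply: "P *v (P *v x) = P *v x"
  by (metis idem matrix_vector_mul_assoc)

lemma cinner_proj_sym: "cinner (P *v x) y = cinner x (P *v y)"
  by (metis cinner_adj self_adj)

lemma norm_proj_le: "norm (P *v x) \<le> norm x"
proof -
  have "cinner (P *v x) (x - P *v x) = 0"
    by (simp add: cinner_proj_sym matrix_vector_mult_diff_distrib proj_idem_apply cinner_diff_right)
  moreover then have "cinner (x - P *v x) (P *v x) = 0"
    using cinner_cnj by (metis complex_cnj_zero)
  moreover have "cinner x x = cinner (P *v x + (x - P *v x)) (P *v x + (x - P *v x))" by simp
  ultimately have "cinner x x = cinner (P *v x) (P *v x) + cinner (x - P *v x) (x - P *v x)"
    unfolding cinner_add_left cinner_add_right by simp
  then have "(norm x)\<^sup>2 = (norm (P *v x))\<^sup>2 + (norm (x - P *v x))\<^sup>2"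
    unfolding cinner_self by (metis of_real_add of_real_eq_iff)
  then have "(norm (P *v x))\<^sup>2 \<le> (norm x)\<^sup>2" by simp
  then show ?thesis by (rule power2_le_imp_le) simp
qed

lemma mem_subsp_iff: "x \<in> subsp P \<longleftrightarrow> P *v x = x"
  unfolding subsp_def using proj_idem_apply by (metis rangeE rangeI)

lemma subspace_subsp: "vec.subspace (subsp P)"
  unfolding vec.subspace_def
  by (auto simp: mem_subsp_iff vector_scalar_commute matrix_vector_right_distrib)

lemma norm_proj_sq_eq_cinner: "(norm (P *v x))\<^sup>2 = Re (cinner x (P *v x))"
  by (metis cinner_proj_sym proj_idem_apply cinner_self Re_complex_of_real)

end

locale projection_onb = projection P for P :: "complex^'n^'n" +
  fixes e :: "nat \<Rightarrow> complex^'n" and m :: nat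
  assumes basis_in_range: "\<And>k. k < m \<Longrightarrow> P *v e k = e k"
    and orthonormal: "orthonormal_upto e m"
    and basis_expansion: "\<And>x. P *v x = x \<Longrightarrow> x = (\<Sum>k<m. cinner (e k) x *s e k)"
begin

lemma cinner_basis: "k < m \<Longrightarrow> l < m \<Longrightarrow> cinner (e k) (e l) = (if k = l then 1 else 0)"
  using orthonormal unfolding orthonormal_upto_def by blast

lemma proj_expansion: "P *v x = (\<Sum>k<m. cinner (e k) x *s e k)"
proof -
  have "P *v x = (\<Sum>k<m. cinner (e k) (P *v x) *s e k)"
    using basis_expansion proj_idem_apply by blast
  also have "\<dots> = (\<Sum>k<m. cinner (e k) x *s e k)"
    by (intro sum.cong refl) (metis cinner_proj_sym basis_in_range lessThan_iff)
  finally show ?thesis .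
qed

lemma basis_length_pos: assumes "P \<noteq> 0" shows "m > 0"
proof (rule ccontr)
  assume "\<not> m > 0"
  then have "P *v x = 0" for x using proj_expansion by simp
  then show False using assms
    by (metis matrix_vector_mult_0 matrix_vector_mul_assoc matrix_eq)
qed

lemma trace_proj_mult: "trace (P ** B) = (\<Sum>k<m. cinner (e k) (B *v e k))"
proof -
  have Pij: "P $ i $ j = (\<Sum>k<m. cnj (e k $ j) * e k $ i)" for i j
  proof -
    have "P $ i $ j = (\<Sum>k<m. cinner (e k) (axis j 1) * e k $ i)"
      unfolding matrix_vector_mult_axis[symmetric] proj_expansion by (simp add: sum_component)
    then show ?thesis by (simp add: cinner_def axis_def if_distrib sum.delta cong: if_cong)
  qed
  have "trace (P ** B) = (\<Sum>i\<in>UNIV. \<Sum>j\<in>UNIV. \<Sum>k<m. cnj (e k $ j) * e k $ i * B$j$i)"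
    by (simp add: trace_def matrix_matrix_mult_def Pij sum_distrib_right)
  also have "\<dots> = (\<Sum>k<m. \<Sum>j\<in>UNIV. \<Sum>i\<in>UNIV. cnj (e k $ j) * e k $ i * B$j$i)"
    by (subst sum.swap, subst (2) sum.swap, subst sum.swap, rule refl)
  also have "\<dots> = (\<Sum>k<m. cinner (e k) (B *v e k))"
    by (simp add: cinner_def matrix_vector_mult_def sum_distrib_left mult_ac)
  finally show ?thesis .
qed

lemma cinner_basis_sums:
  "cinner (\<Sum>k<m. a k *s e k) (\<Sum>k<m. b k *s e k) = (\<Sum>k<m. cnj (a k) * b k)"
proof -
  have "cinner (\<Sum>k<m. a k *s e k) (\<Sum>l<m. b l *s e l) =
          (\<Sum>k<m. cnj (a k) * cinner (e k) (\<Sum>l<m. b l *s e l))"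
    by (simp add: cinner_sum_left cinner_scale_left)
  also have "\<dots> = (\<Sum>k<m. cnj (a k) * b k)"
    by (intro sum.cong refl) (simp add: cinner_orthonormal_expansion[OF orthonormal])
  finally show ?thesis .
qed

lemma norm_sq_eq_sum_coords:
  assumes "P *v x = x" shows "(norm x)\<^sup>2 = (\<Sum>k<m. (cmod (cinner (e k) x))\<^sup>2)"
proof -
  have "of_real ((norm x)\<^sup>2) = (\<Sum>k<m. cnj (cinner (e k) x) * cinner (e k) x)"
    using cinner_basis_sums[of "\<lambda>k. cinner (e k) x" "\<lambda>k. cinner (e k) x"]
    by (simp add: basis_expansion[OF assms, symmetric] cinner_self)
  also have "\<dots> = of_real (\<Sum>k<m. (cmod (cinner (e k) x))\<^sup>2)"
    unfolding of_real_sum by (intro sum.cong refl) (metis complex_norm_square mult.commute of_real_power)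
  finally show ?thesis using of_real_eq_iff by blast
qed

lemma bessel_inequality: "(\<Sum>k<m. (cmod (cinner (e k) y))\<^sup>2) \<le> (norm y)\<^sup>2"
proof -
  have "(\<Sum>k<m. (cmod (cinner (e k) y))\<^sup>2) = (\<Sum>k<m. (cmod (cinner (e k) (P *v y)))\<^sup>2)"
    by (intro sum.cong refl) (metis cinner_proj_sym basis_in_range lessThan_iff)
  also have "\<dots> = (norm (P *v y))\<^sup>2" using norm_sq_eq_sum_coords[of "P *v y"] proj_idem_apply by simp
  also have "\<dots> \<le> (norm y)\<^sup>2" using norm_proj_le by (simp add: power_mono)
  finally show ?thesis .
qed

lemma norm_basis:
  assumes "k < m" shows "norm (e k) = 1"
proof -
  have "complex_of_real ((norm (e k))\<^sup>2) = 1"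
    using cinner_basis[of k k] cinner_self[of "e k"] assms by simp
  then have "(norm (e k))\<^sup>2 = 1\<^sup>2" by (metis of_real_eq_1_iff power_one)
  then show ?thesis using power2_eq_iff_nonneg[of "norm (e k)" 1] by simp
qed

lemma cinner_quadratic_expansion:
  assumes "P *v x = x"
  shows "cinner x (B *v x) =
           (\<Sum>k<m. \<Sum>l<m. cinner (e k) (B *v e l) * (cnj (cinner (e k) x) * cinner (e l) x))"
proof -
  let ?c = "\<lambda>k. cinner (e k) x"
  have "cinner x (B *v x) = cinner (\<Sum>k<m. ?c k *s e k) (B *v (\<Sum>l<m. ?c l *s e l))"
    using basis_expansion[OF assms] by simp
  also have "\<dots> = (\<Sum>k<m. \<Sum>l<m. cinner (e k) (B *v e l) * (cnj (?c k) * ?c l))"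
    by (simp add: vec.sum vector_scalar_commute cinner_sum_left cinner_sum_right
        cinner_scale_left cinner_scale_right sum_distrib_left mult_ac)
       (subst sum.swap, simp add: mult_ac)
  finally show ?thesis .
qed

end

section \<open>Unitaries acting on the coordinates of a subspace\<close>

text \<open>A unitary of the range of \<open>P\<close> is encoded by its \<open>m \<times> m\<close> matrix \<open>V\<close> in the basis \<open>e\<close>;
  \<open>basis_unitary V\<close> extends it by the identity on the orthogonal complement.\<close>

definition unitary_coeffs :: "nat \<Rightarrow> (nat \<Rightarrow> nat \<Rightarrow> complex) \<Rightarrow> bool" where
  "unitary_coeffs m V \<longleftrightarrow>
     (\<forall>k<m. \<forall>l<m. (\<Sum>j<m. cnj (V j k) * V j l) = (if k = l then 1 else 0))"

context projection_onb
begin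

definition rotated_coord :: "(nat \<Rightarrow> nat \<Rightarrow> complex) \<Rightarrow> complex^'n \<Rightarrow> nat \<Rightarrow> complex" where
  "rotated_coord V x k = (\<Sum>l<m. V k l * cinner (e l) x)"

definition basis_unitary :: "(nat \<Rightarrow> nat \<Rightarrow> complex) \<Rightarrow> complex^'n^'n" where
  "basis_unitary V = mat 1 - P + (\<chi> i j. \<Sum>k<m. \<Sum>l<m. V k l * e k $ i * cnj (e l $ j))"

lemma basis_unitary_apply:
  "basis_unitary V *v x = (x - P *v x) + (\<Sum>k<m. rotated_coord V x k *s e k)"
proof -
  have "((\<chi> i j. \<Sum>k<m. \<Sum>l<m. V k l * e k $ i * cnj (e l $ j)) *v x) $ i =
          (\<Sum>k<m. rotated_coord V x k *s e k) $ i" for i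
  proof -
    have "((\<chi> i j. \<Sum>k<m. \<Sum>l<m. V k l * e k $ i * cnj (e l $ j)) *v x) $ i =
            (\<Sum>j\<in>UNIV. \<Sum>k<m. \<Sum>l<m. V k l * e k $ i * cnj (e l $ j) * x $ j)"
      by (simp add: matrix_vector_mult_def sum_distrib_right)
    also have "\<dots> = (\<Sum>k<m. \<Sum>l<m. \<Sum>j\<in>UNIV. V k l * e k $ i * cnj (e l $ j) * x $ j)"
      by (subst sum.swap) (intro sum.cong refl sum.swap)
    also have "\<dots> = (\<Sum>k<m. rotated_coord V x k *s e k) $ i"
      by (simp add: sum_component rotated_coord_def cinner_def sum_distrib_left
          sum_distrib_right mult_ac)
    finally show ?thesis .
  qed
  then show ?thesis
    unfolding basis_unitary_def
    by (simp add: matrix_vector_mult_add_rdistrib matrix_vector_mult_diff_rdistrib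
        matrix_vector_mul_lid vec_eq_iff)
qed

lemma cinner_basis_proj_complement: "k < m \<Longrightarrow> cinner (e k) (x - P *v x) = 0"
  by (simp add: cinner_diff_right flip: cinner_proj_sym) (simp add: basis_in_range)

lemma cinner_proj_complement_plus_range:
  assumes "\<And>k. k < m \<Longrightarrow> cinner (e k) z = 0" "\<And>k. k < m \<Longrightarrow> cinner (e k) z' = 0"
  shows "cinner (z + (\<Sum>k<m. a k *s e k)) (z' + (\<Sum>k<m. b k *s e k)) =
           cinner z z' + (\<Sum>k<m. cnj (a k) * b k)"
proof -
  have "cinner (\<Sum>k<m. a k *s e k) z' = 0"
    using assms(2) by (simp add: cinner_sum_left cinner_scale_left)
  moreover have "cinner (\<Sum>k<m. b k *s e k) z = 0"
    using assms(1) by (simp add: cinner_sum_left cinner_scale_left)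
  then have "cinner z (\<Sum>k<m. b k *s e k) = 0" using cinner_cnj by (metis complex_cnj_zero)
  ultimately show ?thesis
    unfolding cinner_add_left cinner_add_right cinner_basis_sums by simp
qed

lemma sum_rotated_coord_products:
  assumes "unitary_coeffs m V"
  shows "(\<Sum>k<m. cnj (rotated_coord V x k) * rotated_coord V y k) =
           (\<Sum>k<m. cnj (cinner (e k) x) * cinner (e k) y)"
proof -
  let ?a = "\<lambda>l l'. cnj (cinner (e l) x) * cinner (e l') y"
  have "(\<Sum>k<m. cnj (rotated_coord V x k) * rotated_coord V y k)
     = (\<Sum>k<m. \<Sum>l<m. \<Sum>l'<m. cnj (V k l) * V k l' * ?a l l')"
    by (simp add: rotated_coord_def sum_distrib_left sum_distrib_right mult_ac)
  also have "\<dots> = (\<Sum>l<m. \<Sum>k<m. \<Sum>l'<m. cnj (V k l) * V k l' * ?a l l')"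
    by (rule sum.swap)
  also have "\<dots> = (\<Sum>l<m. \<Sum>l'<m. (\<Sum>k<m. cnj (V k l) * V k l') * ?a l l')"
    by (simp only: sum_distrib_right) (intro sum.cong refl sum.swap)
  also have "\<dots> = (\<Sum>l<m. \<Sum>l'<m. (if l = l' then 1 else 0) * ?a l l')"
    using assms unfolding unitary_coeffs_def by (intro sum.cong refl) simp
  also have "\<dots> = (\<Sum>k<m. cnj (cinner (e k) x) * cinner (e k) y)"
    by (simp add: if_distrib[of "\<lambda>x. x * _"] sum.delta cong: if_cong)
  finally show ?thesis .
qed

lemma unitary_basis_unitary:
  assumes "unitary_coeffs m V" shows "unitary (basis_unitary V)"
proof (rule unitary_if_preserves_cinner)
  fix x y
  have decomp: "z = (z - P *v z) + (\<Sum>k<m. cinner (e k) z *s e k)" for z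
    using proj_expansion[of z] by simp
  have "cinner (basis_unitary V *v x) (basis_unitary V *v y) =
          cinner (x - P *v x) (y - P *v y) + (\<Sum>k<m. cnj (cinner (e k) x) * cinner (e k) y)"
    unfolding basis_unitary_apply sum_rotated_coord_products[OF assms, symmetric]
    by (rule cinner_proj_complement_plus_range) (simp_all add: cinner_basis_proj_complement)
  also have "\<dots> = cinner x y"
    by (subst (3 4) decomp, rule cinner_proj_complement_plus_range[symmetric])
       (simp_all add: cinner_basis_proj_complement)
  finally show "cinner (basis_unitary V *v x) (basis_unitary V *v y) = cinner x y" .
qed

lemma basis_unitary_maps_range:
  assumes "P *v x = x" shows "P *v (basis_unitary V *v x) = basis_unitary V *v x"
  using assms unfolding basis_unitary_apply
  by (simp add: matrix_vector_right_distrib vec.sum vector_scalar_commute basis_in_range)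

lemma cinner_basis_unitary: "j < m \<Longrightarrow> cinner (e j) (basis_unitary V *v x) = rotated_coord V x j"
  unfolding basis_unitary_apply cinner_add_right cinner_basis_proj_complement
  using cinner_orthonormal_expansion[OF orthonormal] by simp

end

section \<open>Moments of the coordinates under the uniform measure\<close>

locale uniform_on_range = projection_onb P e m for P :: "complex^'n^'n" and e m +
  fixes u :: "(complex^'n) measure"
  assumes uniform: "uniform_sphere_measure (subsp P) u" and nonzero: "P \<noteq> 0"
begin

lemma prob_space_u: "prob_space u"
  using uniform unfolding uniform_sphere_measure_def by blast

lemma space_u: "space u = {x. P *v x = x \<and> norm x = 1}"
  using uniform unfolding uniform_sphere_measure_def unit_sphere_of_def by (auto simp: mem_subsp_iff)

lemma sets_u: "sets u = sets (restrict_space borel (space u))"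
  using uniform unfolding uniform_sphere_measure_def by (simp add: space_u)

lemma borel_measurable_continuous:
  assumes "continuous_on UNIV f" shows "f \<in> borel_measurable u"
proof -
  have "f \<in> borel_measurable (restrict_space borel (space u))"
    by (intro measurable_restrict_space1 borel_measurable_continuous_onI assms)
  then show ?thesis by (subst measurable_cong_sets[OF sets_u refl])
qed

lemma integrable_continuous:
  fixes f :: "complex^'n \<Rightarrow> 'b::{banach,second_countable_topology}"
  assumes "continuous_on UNIV f" shows "integrable u f"
proof -
  have "compact (f ` sphere 0 1)"
    by (intro compact_continuous_image continuous_on_subset[OF assms]) auto
  then obtain B where B: "\<forall>y\<in>f ` sphere 0 1. norm y \<le> B"
    using compact_imp_bounded bounded_iff by metis
  have "AE x in u. norm (f x) \<le> B"
    using B by (intro AE_I2) (auto simp: space_u)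
  then show ?thesis
    using finite_measure.integrable_const_bound[OF prob_space.axioms(1)[OF prob_space_u] _
        borel_measurable_continuous[OF assms]]
    by blast
qed

lemma integral_sum_continuous:
  fixes f :: "'i \<Rightarrow> complex^'n \<Rightarrow> 'b::{banach,second_countable_topology}"
  assumes "\<And>i. i \<in> I \<Longrightarrow> continuous_on UNIV (f i)"
  shows "(\<integral>x. (\<Sum>i\<in>I. f i x) \<partial>u) = (\<Sum>i\<in>I. \<integral>x. f i x \<partial>u)"
  by (rule Bochner_Integration.integral_sum) (use assms integrable_continuous in auto)

lemma integral_unitary_invariant:
  fixes f :: "complex^'n \<Rightarrow> 'b::{banach,second_countable_topology}"
  assumes U: "unitary U" "\<And>x. P *v x = x \<Longrightarrow> P *v (U *v x) = U *v x"
    and f: "continuous_on UNIV f"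
  shows "(\<integral>x. f (U *v x) \<partial>u) = (\<integral>x. f x \<partial>u)"
proof -
  have "continuous_on UNIV (\<lambda>x. U *v x)"
    unfolding matrix_vector_mult_def by (intro continuous_intros)
  then have "(\<lambda>x. U *v x) \<in> measurable (restrict_space borel (space u)) (restrict_space borel (space u))"
    by (intro measurable_restrict_space3 borel_measurable_continuous_onI)
       (auto simp: space_u U unitary_norm_preserving)
  then have meas: "(\<lambda>x. U *v x) \<in> measurable u u"
    using measurable_cong_sets[OF sets_u sets_u] by simp
  have "distr u u (\<lambda>x. U *v x) = u"
    using uniform U unfolding uniform_sphere_measure_def by (simp add: mem_subsp_iff)
  then have "(\<integral>x. f x \<partial>u) = (\<integral>x. f x \<partial>(distr u u (\<lambda>x. U *v x)))" by simp
  also have "\<dots> = (\<integral>x. f (U *v x) \<partial>u)"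
    by (rule integral_distr[OF meas borel_measurable_continuous[OF f]])
  finally show ?thesis by simp
qed

definition coord :: "nat \<Rightarrow> complex^'n \<Rightarrow> complex" where
  "coord k x = cinner (e k) x"

lemma continuous_on_coord [continuous_intros]:
  "continuous_on S f \<Longrightarrow> continuous_on S (\<lambda>x. coord k (f x))"
  unfolding coord_def by (intro continuous_intros)

definition moment2 :: "nat \<Rightarrow> nat \<Rightarrow> complex" where
  "moment2 k l = (\<integral>x. cnj (coord k x) * coord l x \<partial>u)"

definition moment4 :: "nat \<Rightarrow> nat \<Rightarrow> nat \<Rightarrow> nat \<Rightarrow> complex" where
  "moment4 k l p q = (\<integral>x. cnj (coord k x) * coord l x * cnj (coord p x) * coord q x \<partial>u)"

lemma moment4_swap_pairs: "moment4 k l p q = moment4 p q k l"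
  unfolding moment4_def by (simp add: mult_ac)

lemma moment4_swap_right: "moment4 k l p q = moment4 k q p l"
  unfolding moment4_def by (simp add: mult_ac)

lemma integral_sum2_monomials:
  "finite K \<Longrightarrow> finite L \<Longrightarrow>
   (\<integral>x. (\<Sum>k\<in>K. \<Sum>l\<in>L. a k l * (cnj (coord k x) * coord l x)) \<partial>u) =
     (\<Sum>k\<in>K. \<Sum>l\<in>L. a k l * moment2 k l)"
  unfolding moment2_def
  by (subst integral_sum_continuous, fastforce intro!: continuous_intros,
      intro sum.cong refl,
      subst integral_sum_continuous, fastforce intro!: continuous_intros,
      intro sum.cong refl integral_mult_right_zero)

lemma integral_sum4_monomials:
  "finite K \<Longrightarrow> finite L \<Longrightarrow> finite K' \<Longrightarrow> finite L' \<Longrightarrow>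
   (\<integral>x. (\<Sum>k\<in>K. \<Sum>l\<in>L. \<Sum>p\<in>K'. \<Sum>q\<in>L'.
            a k l p q * (cnj (coord k x) * coord l x * cnj (coord p x) * coord q x)) \<partial>u) =
     (\<Sum>k\<in>K. \<Sum>l\<in>L. \<Sum>p\<in>K'. \<Sum>q\<in>L'. a k l p q * moment4 k l p q)"
  unfolding moment4_def
  by (subst integral_sum_continuous, fastforce intro!: continuous_intros,
      intro sum.cong refl,
      subst integral_sum_continuous, fastforce intro!: continuous_intros,
      intro sum.cong refl,
      subst integral_sum_continuous, fastforce intro!: continuous_intros,
      intro sum.cong refl,
      subst integral_sum_continuous, fastforce intro!: continuous_intros,
      intro sum.cong refl integral_mult_right_zero)

lemma sum_sq_coord_eq_1:
  assumes "x \<in> space u" shows "(\<Sum>k<m. cnj (coord k x) * coord k x) = 1"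
proof -
  have "(\<Sum>k<m. cnj (coord k x) * coord k x) = of_real (\<Sum>k<m. (cmod (coord k x))\<^sup>2)"
    unfolding of_real_sum
    by (intro sum.cong refl) (metis complex_norm_square mult.commute of_real_power)
  also have "\<dots> = 1" using norm_sq_eq_sum_coords[of x] assms by (simp add: space_u coord_def)
  finally show ?thesis .
qed

lemma sum_moment2_diag: "(\<Sum>k<m. moment2 k k) = 1"
proof -
  have "(\<Sum>k<m. moment2 k k) = (\<integral>x. (\<Sum>k<m. cnj (coord k x) * coord k x) \<partial>u)"
    unfolding moment2_def by (rule integral_sum_continuous[symmetric]) (intro continuous_intros)
  also have "\<dots> = (\<integral>x. 1 \<partial>u)"
    by (rule Bochner_Integration.integral_cong) (simp_all add: sum_sq_coord_eq_1)
  finally show ?thesis using prob_space.prob_space[OF prob_space_u] by simp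
qed

lemma sum_moment4_diag: "(\<Sum>k<m. \<Sum>p<m. moment4 k k p p) = 1"
proof -
  have "(\<Sum>k<m. \<Sum>p<m. moment4 k k p p) =
          (\<integral>x. (\<Sum>k<m. \<Sum>p<m. cnj (coord k x) * coord k x * cnj (coord p x) * coord p x) \<partial>u)"
    unfolding moment4_def
    by (subst integral_sum_continuous, fastforce intro!: continuous_intros,
        intro sum.cong refl integral_sum_continuous[symmetric] continuous_intros)
  also have "\<dots> = (\<integral>x. (\<Sum>k<m. cnj (coord k x) * coord k x) * (\<Sum>p<m. cnj (coord p x) * coord p x) \<partial>u)"
    by (simp add: sum_distrib_left sum_distrib_right mult_ac)
  also have "\<dots> = (\<integral>x. 1 \<partial>u)"
    by (rule Bochner_Integration.integral_cong) (simp_all add: sum_sq_coord_eq_1)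
  finally show ?thesis using prob_space.prob_space[OF prob_space_u] by simp
qed

lemma moment2_rotated:
  assumes "unitary_coeffs m V" "k < m" "l < m"
  shows "moment2 k l = (\<integral>x. cnj (rotated_coord V x k) * rotated_coord V x l \<partial>u)"
  unfolding moment2_def
  using integral_unitary_invariant[OF unitary_basis_unitary[OF assms(1)] basis_unitary_maps_range,
      of "\<lambda>x. cnj (coord k x) * coord l x"] assms(2,3)
  by (simp add: coord_def cinner_basis_unitary continuous_intros)

lemma moment4_rotated:
  assumes "unitary_coeffs m V" "k < m" "l < m" "p < m" "q < m"
  shows "moment4 k l p q = (\<integral>x. cnj (rotated_coord V x k) * rotated_coord V x l *
                                   cnj (rotated_coord V x p) * rotated_coord V x q \<partial>u)"
  unfolding moment4_def
  using integral_unitary_invariant[OF unitary_basis_unitary[OF assms(1)] basis_unitary_maps_range,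
      of "\<lambda>x. cnj (coord k x) * coord l x * cnj (coord p x) * coord q x"] assms(2-5)
  by (simp add: coord_def cinner_basis_unitary continuous_intros)

end

definition phase :: "nat \<Rightarrow> nat \<Rightarrow> complex" where
  "phase j a = (if a = j then \<i> else 1)"

definition phase_coeffs :: "nat \<Rightarrow> nat \<Rightarrow> nat \<Rightarrow> complex" where
  "phase_coeffs j a b = (if a = b then phase j a else 0)"

lemma unitary_coeffs_phase: "unitary_coeffs m (phase_coeffs j)"
  unfolding unitary_coeffs_def phase_coeffs_def phase_def
  by (auto simp: if_distrib[of "\<lambda>x. _ * x"] if_distrib[of cnj] sum.delta cong: if_cong)

definition perm_coeffs :: "(nat \<Rightarrow> nat) \<Rightarrow> nat \<Rightarrow> nat \<Rightarrow> complex" where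
  "perm_coeffs \<sigma> a b = (if b = \<sigma> a then 1 else 0)"

lemma unitary_coeffs_perm:
  assumes "\<sigma> permutes {..<m}" shows "unitary_coeffs m (perm_coeffs \<sigma>)"
  unfolding unitary_coeffs_def
proof (intro allI impI)
  fix k l assume k: "k < m" and l: "l < m"
  have "(\<Sum>j<m. cnj (perm_coeffs \<sigma> j k) * perm_coeffs \<sigma> j l) =
          (\<Sum>j<m. if j = inv \<sigma> k then (if k = l then 1 else 0) else 0)"
  proof (intro sum.cong refl)
    fix j
    have "\<sigma> j = k \<longleftrightarrow> inv \<sigma> k = j" using permutes_inv_eq[OF assms] by blast
    then show "cnj (perm_coeffs \<sigma> j k) * perm_coeffs \<sigma> j l =
                 (if j = inv \<sigma> k then (if k = l then 1 else 0) else 0)"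
      unfolding perm_coeffs_def by auto
  qed
  also have "\<dots> = (if k = l then 1 else 0)"
    using permutes_in_image[OF permutes_inv[OF assms]] k by (simp add: sum.delta')
  finally show "(\<Sum>j<m. cnj (perm_coeffs \<sigma> j k) * perm_coeffs \<sigma> j l) = (if k = l then 1 else 0)" .
qed

definition inv_sqrt2 :: complex where
  "inv_sqrt2 = of_real (1 / sqrt 2)"

lemma inv_sqrt2_sq: "inv_sqrt2 * inv_sqrt2 = 1 / 2"
proof -
  have "inv_sqrt2 * inv_sqrt2 = of_real (1 / sqrt 2 * (1 / sqrt 2))"
    unfolding inv_sqrt2_def by (simp only: of_real_mult)
  also have "1 / sqrt 2 * (1 / sqrt 2) = (1 / 2 :: real)" by (simp add: field_simps)
  finally show ?thesis by simp
qed

lemma cnj_inv_sqrt2 [simp]: "cnj inv_sqrt2 = inv_sqrt2"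
  unfolding inv_sqrt2_def by simp

definition hadamard_coeffs :: "nat \<Rightarrow> nat \<Rightarrow> complex" where
  "hadamard_coeffs a b =
     (if a < 2 \<and> b < 2 then (if a = 1 \<and> b = 1 then - inv_sqrt2 else inv_sqrt2)
      else if a = b then 1 else 0)"

lemma sum_lessThan_split2:
  assumes "2 \<le> (m::nat)" shows "(\<Sum>j<m. f j) = f 0 + f 1 + (\<Sum>j\<in>{2..<m}. f j)"
proof -
  have "{..<m} = insert 0 (insert 1 {2..<m})" using assms by auto
  then show ?thesis by (simp add: add.assoc)
qed

lemma unitary_coeffs_hadamard:
  assumes "2 \<le> m" shows "unitary_coeffs m hadamard_coeffs"
  unfolding unitary_coeffs_def
proof (intro allI impI)
  fix k l assume k: "k < m" and l: "l < m"
  have "(\<Sum>j\<in>{2..<m}. cnj (hadamard_coeffs j k) * hadamard_coeffs j l) =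
          (\<Sum>j\<in>{2..<m}. if j = k then (if k = l then 1 else 0) else 0)"
    by (intro sum.cong refl) (auto simp: hadamard_coeffs_def)
  also have "\<dots> = (if 2 \<le> k \<and> k = l then 1 else 0)" using k by (simp add: sum.delta')
  finally have rest: "(\<Sum>j\<in>{2..<m}. cnj (hadamard_coeffs j k) * hadamard_coeffs j l) =
                        (if 2 \<le> k \<and> k = l then 1 else 0)" .
  consider "2 \<le> k" | "k < 2" "2 \<le> l" | "k = 0" "l = 0" | "k = 0" "l = 1" | "k = 1" "l = 0"
    | "k = 1" "l = 1"
    by linarith
  then have "cnj (hadamard_coeffs 0 k) * hadamard_coeffs 0 l +
             cnj (hadamard_coeffs 1 k) * hadamard_coeffs 1 l +
             (if 2 \<le> k \<and> k = l then 1 else 0) = (if k = l then 1 else 0)"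
    by cases (simp_all add: hadamard_coeffs_def inv_sqrt2_sq)
  then show "(\<Sum>j<m. cnj (hadamard_coeffs j k) * hadamard_coeffs j l) = (if k = l then 1 else 0)"
    unfolding sum_lessThan_split2[OF assms] rest .
qed

context uniform_on_range
begin

lemma rotated_coord_phase:
  "k < m \<Longrightarrow> rotated_coord (phase_coeffs j) x k = phase j k * coord k x"
  unfolding rotated_coord_def phase_coeffs_def coord_def
  by (simp add: if_distrib[of "\<lambda>x. x * _"] sum.delta cong: if_cong)

lemma rotated_coord_perm:
  assumes "\<sigma> permutes {..<m}" "k < m" shows "rotated_coord (perm_coeffs \<sigma>) x k = coord (\<sigma> k) x"
proof -
  have "\<sigma> k < m" using permutes_in_image[OF assms(1)] assms(2) by simp
  then show ?thesis unfolding rotated_coord_def perm_coeffs_def coord_def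
    by (simp add: if_distrib[of "\<lambda>x. x * _"] sum.delta' cong: if_cong)
qed

lemma rotated_coord_hadamard:
  assumes "2 \<le> m" shows "rotated_coord hadamard_coeffs x 0 = inv_sqrt2 * (coord 0 x + coord 1 x)"
proof -
  have "(\<Sum>j\<in>{2..<m}. hadamard_coeffs 0 j * cinner (e j) x) = 0"
    by (intro sum.neutral) (auto simp: hadamard_coeffs_def)
  then show ?thesis
    unfolding rotated_coord_def sum_lessThan_split2[OF assms]
    by (simp add: hadamard_coeffs_def coord_def distrib_left)
qed

text \<open>A moment that some diagonal phase rotation multiplies by a factor \<open>\<noteq> 1\<close> vanishes; for a
  fourth moment, rotate a coordinate occurring a different number of times conjugated and
  unconjugated.\<close>

lemma zero_if_eq_mult: "(z::complex) = F * z \<Longrightarrow> F \<noteq> 1 \<Longrightarrow> z = 0"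
  by (metis mult_cancel_right1 mult.commute)

lemma moment2_offdiag_zero:
  assumes "k < m" "l < m" "k \<noteq> l" shows "moment2 k l = 0"
proof -
  have "moment2 k l = (\<integral>x. (- \<i>) * (cnj (coord k x) * coord l x) \<partial>u)"
    unfolding moment2_rotated[OF unitary_coeffs_phase[of m k] assms(1,2)]
    using assms by (simp add: rotated_coord_phase phase_def mult_ac)
  then have "moment2 k l = - \<i> * moment2 k l"
    unfolding moment2_def by (simp only: integral_mult_right_zero)
  then show ?thesis by (rule zero_if_eq_mult) (simp add: complex_eq_iff)
qed

lemma moment4_phase:
  assumes "k < m" "l < m" "p < m" "q < m"
  shows "moment4 k l p q =
           cnj (phase j k) * phase j l * cnj (phase j p) * phase j q * moment4 k l p q"
proof -
  have "moment4 k l p q = (\<integral>x. (cnj (phase j k) * phase j l * cnj (phase j p) * phase j q) *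
                              (cnj (coord k x) * coord l x * cnj (coord p x) * coord q x) \<partial>u)"
    unfolding moment4_rotated[OF unitary_coeffs_phase[of m j] assms(1-4)]
    using assms by (simp add: rotated_coord_phase mult_ac)
  then show ?thesis unfolding moment4_def by (simp only: integral_mult_right_zero)
qed

lemma moment4_unpaired_zero:
  assumes "k < m" "l < m" "p < m" "q < m" "\<not> ((k = l \<and> p = q) \<or> (k = q \<and> p = l))"
  shows "moment4 k l p q = 0"
proof -
  have "\<exists>j. cnj (phase j k) * phase j l * cnj (phase j p) * phase j q \<noteq> 1"
  proof (cases "k \<noteq> l \<and> k \<noteq> q")
    case True
    then show ?thesis unfolding phase_def
      by (intro exI[of _ k]) (cases "p = k"; simp add: complex_eq_iff)
  next
    case False
    then consider "k = l" "p \<noteq> q" | "k = q" "k \<noteq> l" "p \<noteq> l" using assms(5) by blast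
    then show ?thesis
    proof cases
      case 1
      then show ?thesis unfolding phase_def
        by (intro exI[of _ q]) (cases "k = q"; simp add: complex_eq_iff)
    next
      case 2
      then show ?thesis unfolding phase_def by (intro exI[of _ l]) (simp add: complex_eq_iff)
    qed
  qed
  then obtain j where "cnj (phase j k) * phase j l * cnj (phase j p) * phase j q \<noteq> 1" ..
  then show ?thesis by (rule zero_if_eq_mult[OF moment4_phase[OF assms(1-4)]])
qed

lemma moment2_perm:
  assumes "\<sigma> permutes {..<m}" "k < m" "l < m"
  shows "moment2 k l = moment2 (\<sigma> k) (\<sigma> l)"
  unfolding moment2_rotated[OF unitary_coeffs_perm[OF assms(1)] assms(2-3)] using assms
  by (simp add: rotated_coord_perm moment2_def)

lemma moment4_perm:
  assumes "\<sigma> permutes {..<m}" "k < m" "l < m" "p < m" "q < m"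
  shows "moment4 k l p q = moment4 (\<sigma> k) (\<sigma> l) (\<sigma> p) (\<sigma> q)"
  unfolding moment4_rotated[OF unitary_coeffs_perm[OF assms(1)] assms(2-5)] using assms
  by (simp add: rotated_coord_perm moment4_def)

lemma moment2_diag_eq: "k < m \<Longrightarrow> moment2 k k = moment2 0 0"
  using moment2_perm[OF permutes_swap_id[of 0 "{..<m}" k], of 0 0] by simp

lemma moment4_diag_eq: "k < m \<Longrightarrow> moment4 k k k k = moment4 0 0 0 0"
  using moment4_perm[OF permutes_swap_id[of 0 "{..<m}" k], of 0 0 0 0] by simp

lemma moment4_pair_eq:
  assumes "k < m" "p < m" "k \<noteq> p" shows "moment4 k k p p = moment4 0 0 1 1"
proof -
  define p' where "p' = Transposition.transpose 0 k p"
  have p': "p' \<noteq> 0" "p' < m" "1 < m"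
    using assms by (auto simp: p'_def Transposition.transpose_def)
  define \<sigma> where "\<sigma> = Transposition.transpose 0 k \<circ> Transposition.transpose 1 p'"
  have "\<sigma> permutes {..<m}" unfolding \<sigma>_def
    by (intro permutes_compose permutes_swap_id) (use assms p' in auto)
  moreover have "\<sigma> 0 = k" unfolding \<sigma>_def using p'(1) by (simp add: Transposition.transpose_def)
  moreover have "\<sigma> 1 = p" unfolding \<sigma>_def p'_def by simp
  ultimately show ?thesis using moment4_perm[of \<sigma> 0 0 1 1] p' by simp
qed

lemma moment4_hadamard:
  assumes "2 \<le> m" shows "moment4 0 0 0 0 = 2 * moment4 0 0 1 1"
proof -
  define r where "r = inv_sqrt2 * inv_sqrt2 * inv_sqrt2 * inv_sqrt2"
  have r: "r = 1 / 4" unfolding r_def by (simp add: mult.assoc inv_sqrt2_sq)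
  have expand: "cnj (f 0 + f 1) * (f 0 + f 1) * cnj (f 0 + f 1) * (f 0 + f 1) =
    (\<Sum>k\<in>{0,1}. \<Sum>l\<in>{0,1}. \<Sum>p\<in>{0,1}. \<Sum>q\<in>{0::nat,1}. cnj (f k) * f l * cnj (f p) * f q)"
    for f :: "nat \<Rightarrow> complex"
    by (simp add: algebra_simps)
  let ?h = "rotated_coord hadamard_coeffs"
  have "moment4 0 0 0 0 = (\<integral>x. cnj (?h x 0) * ?h x 0 * cnj (?h x 0) * ?h x 0 \<partial>u)"
    using moment4_rotated[OF unitary_coeffs_hadamard[OF assms], of 0 0 0 0] assms by simp
  also have "\<dots> = (\<integral>x. r * (\<Sum>k\<in>{0,1}. \<Sum>l\<in>{0,1}. \<Sum>p\<in>{0,1}. \<Sum>q\<in>{0::nat,1}.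
          cnj (coord k x) * coord l x * cnj (coord p x) * coord q x) \<partial>u)"
  proof (rule Bochner_Integration.integral_cong[OF refl])
    fix x
    have "cnj (?h x 0) * ?h x 0 * cnj (?h x 0) * ?h x 0 =
          r * (cnj (coord 0 x + coord 1 x) * (coord 0 x + coord 1 x) *
               cnj (coord 0 x + coord 1 x) * (coord 0 x + coord 1 x))"
      unfolding rotated_coord_hadamard[OF assms] r_def by (simp add: mult_ac)
    then show "cnj (?h x 0) * ?h x 0 * cnj (?h x 0) * ?h x 0 =
          r * (\<Sum>k\<in>{0,1}. \<Sum>l\<in>{0,1}. \<Sum>p\<in>{0,1}. \<Sum>q\<in>{0::nat,1}.
               cnj (coord k x) * coord l x * cnj (coord p x) * coord q x)"
      by (simp only: expand[of "\<lambda>k. coord k x"])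
  qed
  also have "\<dots> = (\<integral>x. (\<Sum>k\<in>{0,1}. \<Sum>l\<in>{0,1}. \<Sum>p\<in>{0,1}. \<Sum>q\<in>{0::nat,1}.
          r * (cnj (coord k x) * coord l x * cnj (coord p x) * coord q x)) \<partial>u)"
    by (simp only: sum_distrib_left)
  also have "\<dots> = (\<Sum>k\<in>{0,1}. \<Sum>l\<in>{0,1}. \<Sum>p\<in>{0,1}. \<Sum>q\<in>{0::nat,1}. r * moment4 k l p q)"
    by (intro integral_sum4_monomials finite.intros)
  also have "\<dots> = (2 * moment4 0 0 0 0 + 4 * moment4 0 0 1 1) / 4"
  proof -
    have "moment4 k l p q = 0"
      if "k < 2" "l < 2" "p < 2" "q < 2" "\<not> ((k = l \<and> p = q) \<or> (k = q \<and> p = l))" for k l p q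
      using moment4_unpaired_zero[of k l p q] that assms by simp
    moreover have "moment4 0 1 1 0 = moment4 0 0 1 1" "moment4 1 1 0 0 = moment4 0 0 1 1"
      by (rule moment4_swap_right moment4_swap_pairs)+
    moreover have "moment4 1 0 0 1 = moment4 0 0 1 1"
      using moment4_swap_right[of 1 0 0 1] moment4_swap_pairs[of 1 1 0 0] by simp
    moreover have "moment4 1 1 1 1 = moment4 0 0 0 0" using moment4_diag_eq[of 1] assms by simp
    ultimately show ?thesis unfolding r by simp
  qed
  finally show ?thesis by (simp add: field_simps)
qed

lemma moment2_eq:
  assumes "k < m" "l < m" shows "moment2 k l = (if k = l then 1 / of_nat m else 0)"
proof (cases "k = l")
  case True
  have "(\<Sum>k<m. moment2 k k) = (\<Sum>k<m. moment2 0 0)"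
    by (intro sum.cong refl moment2_diag_eq) simp
  then have "of_nat m * moment2 0 0 = 1" using sum_moment2_diag by simp
  then show ?thesis
    using True moment2_diag_eq[OF assms(1)] basis_length_pos[OF nonzero] by (simp add: field_simps)
next
  case False
  then show ?thesis using moment2_offdiag_zero assms by simp
qed

lemma moment4_base_values:
  defines "D \<equiv> of_nat m * (of_nat m + 1) :: complex"
  shows "moment4 0 0 0 0 = 2 / D" and "2 \<le> m \<Longrightarrow> moment4 0 0 1 1 = 1 / D"
proof -
  have m: "0 < m" using basis_length_pos[OF nonzero] .
  have "(of_nat m + 1 :: complex) = of_nat (Suc m)" by simp
  then have D: "D \<noteq> 0" using m unfolding D_def by (simp del: of_nat_Suc)
  have "moment4 0 0 0 0 = 2 / D \<and> (2 \<le> m \<longrightarrow> moment4 0 0 1 1 = 1 / D)"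
  proof (cases "m = 1")
    case True
    then show ?thesis using sum_moment4_diag by (simp add: D_def)
  next
    case False
    then have m2: "2 \<le> m" using m by simp
    let ?a = "moment4 0 0 0 0" and ?b = "moment4 0 0 1 1"
    have row: "(\<Sum>p<m. moment4 k k p p) = ?a + (of_nat m - 1) * ?b" if "k < m" for k
    proof -
      have "(\<Sum>p<m. moment4 k k p p) = moment4 k k k k + (\<Sum>p\<in>{..<m} - {k}. moment4 k k p p)"
        using that by (simp add: sum.remove)
      also have "(\<Sum>p\<in>{..<m} - {k}. moment4 k k p p) = (\<Sum>p\<in>{..<m} - {k}. ?b)"
        using that by (intro sum.cong refl moment4_pair_eq) auto
      finally show ?thesis using that moment4_diag_eq[OF that] m by (simp add: of_nat_diff)
    qed
    have "(\<Sum>k<m. \<Sum>p<m. moment4 k k p p) = (\<Sum>k<m. ?a + (of_nat m - 1) * ?b)"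
      by (intro sum.cong refl row) simp
    then have "of_nat m * (?a + (of_nat m - 1) * ?b) = 1"
      unfolding sum_moment4_diag by simp
    moreover have "?a = 2 * ?b" by (rule moment4_hadamard[OF m2])
    ultimately have "?b * D = 1" unfolding D_def by (simp add: algebra_simps)
    then have "?b = 1 / D" using D by (simp add: field_simps)
    then show ?thesis using \<open>?a = 2 * ?b\<close> by simp
  qed
  then show "moment4 0 0 0 0 = 2 / D" and "2 \<le> m \<Longrightarrow> moment4 0 0 1 1 = 1 / D" by auto
qed

lemma moment4_eq:
  assumes "k < m" "l < m" "p < m" "q < m"
  shows "moment4 k l p q = ((if k = l \<and> p = q then 1 else 0) + (if k = q \<and> p = l then 1 else 0)) /
                             (of_nat m * (of_nat m + 1))"
proof (cases "(k = l \<and> p = q) \<or> (k = q \<and> p = l)")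
  case False
  then have "\<not> (k = l \<and> p = q)" "\<not> (k = q \<and> p = l)" by auto
  with moment4_unpaired_zero[OF assms False] show ?thesis by (simp only: if_False) simp
next
  case True
  then consider "k = l" "p = q" "k = p" | "k = l" "p = q" "k \<noteq> p" | "k = q" "p = l" "k \<noteq> p" "k \<noteq> l"
    by blast
  then show ?thesis
  proof cases
    case 1
    then show ?thesis using moment4_diag_eq[OF assms(1)] moment4_base_values(1) by simp
  next
    case 2
    then have "2 \<le> m" using assms by linarith
    then show ?thesis using moment4_pair_eq[of k p] 2 assms moment4_base_values(2) by simp
  next
    case 3
    then have "2 \<le> m" using assms by linarith
    then show ?thesis
      using moment4_pair_eq[of k p] moment4_swap_right[of k p p k] 3 assms moment4_base_values(2)
      by simp
  qed
qed

end

section \<open>Mean and variance of quadratic forms\<close>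

lemma mult_indicator_sum_divide:
  "(z::complex) * (((if A then 1 else 0) + (if B then 1 else 0)) / D) =
     ((if A then z else 0) + (if B then z else 0)) / D"
  by (cases A; cases B) (simp_all add: field_simps)

lemma sum_quartic_pairings:
  fixes b :: "'i \<Rightarrow> 'i \<Rightarrow> 'a::comm_ring_1"
  assumes "finite I"
  shows "(\<Sum>k\<in>I. \<Sum>l\<in>I. \<Sum>p\<in>I. \<Sum>q\<in>I.
            (if k = l \<and> p = q then b k l * b p q else 0) + (if k = q \<and> p = l then b k l * b p q else 0)) =
         (\<Sum>k\<in>I. b k k) * (\<Sum>k\<in>I. b k k) + (\<Sum>k\<in>I. \<Sum>l\<in>I. b k l * b l k)"
proof -
  have "(\<Sum>k\<in>I. \<Sum>l\<in>I. \<Sum>p\<in>I. \<Sum>q\<in>I.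
            (if k = l \<and> p = q then b k l * b p q else 0) + (if k = q \<and> p = l then b k l * b p q else 0)) =
        (\<Sum>k\<in>I. \<Sum>l\<in>I. \<Sum>p\<in>I. (if k = l then b k l * b p p else 0) + (if p = l then b k l * b p k else 0))"
    using assms by (intro sum.cong refl) (simp add: sum.distrib sum.delta sum.delta' cong: if_cong)
  also have "\<dots> = (\<Sum>k\<in>I. \<Sum>l\<in>I. (if k = l then b k l * (\<Sum>p\<in>I. b p p) else 0) + b k l * b l k)"
    using assms by (intro sum.cong refl) (simp add: sum.distrib sum_distrib_left sum.delta')
  also have "\<dots> = (\<Sum>k\<in>I. b k k) * (\<Sum>k\<in>I. b k k) + (\<Sum>k\<in>I. \<Sum>l\<in>I. b k l * b l k)"
    using assms by (simp add: sum.distrib sum_distrib_right sum.delta)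
  finally show ?thesis .
qed

context uniform_on_range
begin

definition basis_entry :: "complex^'n^'n \<Rightarrow> nat \<Rightarrow> nat \<Rightarrow> complex" where
  "basis_entry B k l = cinner (e k) (B *v e l)"

lemma cinner_quadratic_expansion_coord:
  assumes "x \<in> space u"
  shows "cinner x (B *v x) = (\<Sum>k<m. \<Sum>l<m. basis_entry B k l * (cnj (coord k x) * coord l x))"
  using cinner_quadratic_expansion[of x B] assms by (simp add: space_u basis_entry_def coord_def)

lemma integral_quadratic_form:
  "(\<integral>x. cinner x (B *v x) \<partial>u) = trace (P ** B) / of_nat m"
proof -
  have "(\<integral>x. cinner x (B *v x) \<partial>u) =
          (\<integral>x. (\<Sum>k<m. \<Sum>l<m. basis_entry B k l * (cnj (coord k x) * coord l x)) \<partial>u)"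
    by (rule Bochner_Integration.integral_cong[OF refl]) (simp add: cinner_quadratic_expansion_coord)
  also have "\<dots> = (\<Sum>k<m. \<Sum>l<m. basis_entry B k l * moment2 k l)"
    by (simp add: integral_sum2_monomials)
  also have "\<dots> = (\<Sum>k<m. basis_entry B k k / of_nat m)"
    by (intro sum.cong refl) (simp add: moment2_eq if_distrib[of "\<lambda>x. _ * x"] sum.delta cong: if_cong)
  also have "\<dots> = trace (P ** B) / of_nat m"
    by (simp add: trace_proj_mult basis_entry_def sum_divide_distrib)
  finally show ?thesis .
qed

lemma integral_quadratic_form_sq:
  "(\<integral>x. cinner x (B *v x) * cinner x (B *v x) \<partial>u) =
     (trace (P ** B) * trace (P ** B) + (\<Sum>k<m. \<Sum>l<m. basis_entry B k l * basis_entry B l k)) /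
       (of_nat m * (of_nat m + 1))"
proof -
  let ?D = "of_nat m * (of_nat m + 1) :: complex" and ?b = "basis_entry B"
  have "(\<integral>x. cinner x (B *v x) * cinner x (B *v x) \<partial>u) =
     (\<integral>x. (\<Sum>k<m. \<Sum>l<m. \<Sum>p<m. \<Sum>q<m. (?b k l * ?b p q) *
              (cnj (coord k x) * coord l x * cnj (coord p x) * coord q x)) \<partial>u)"
  proof (rule Bochner_Integration.integral_cong[OF refl])
    fix x assume "x \<in> space u"
    then have "cinner x (B *v x) * cinner x (B *v x) =
      (\<Sum>k<m. \<Sum>l<m. ?b k l * (cnj (coord k x) * coord l x)) *
      (\<Sum>p<m. \<Sum>q<m. ?b p q * (cnj (coord p x) * coord q x))"
      by (simp only: cinner_quadratic_expansion_coord)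
    then show "cinner x (B *v x) * cinner x (B *v x) =
      (\<Sum>k<m. \<Sum>l<m. \<Sum>p<m. \<Sum>q<m. (?b k l * ?b p q) *
         (cnj (coord k x) * coord l x * cnj (coord p x) * coord q x))"
      by (simp only: sum_distrib_right sum_distrib_left) (simp add: mult_ac)
  qed
  also have "\<dots> = (\<Sum>k<m. \<Sum>l<m. \<Sum>p<m. \<Sum>q<m. (?b k l * ?b p q) * moment4 k l p q)"
    by (intro integral_sum4_monomials finite_lessThan)
  also have "\<dots> = (\<Sum>k<m. \<Sum>l<m. \<Sum>p<m. \<Sum>q<m.
        ((if k = l \<and> p = q then ?b k l * ?b p q else 0) +
         (if k = q \<and> p = l then ?b k l * ?b p q else 0)) / ?D)"
  proof (intro sum.cong refl)
    fix k l p q assume "k \<in> {..<m}" "l \<in> {..<m}" "p \<in> {..<m}" "q \<in> {..<m}"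
    then show "(?b k l * ?b p q) * moment4 k l p q =
      ((if k = l \<and> p = q then ?b k l * ?b p q else 0) +
       (if k = q \<and> p = l then ?b k l * ?b p q else 0)) / ?D"
      by (simp only: moment4_eq lessThan_iff mult_indicator_sum_divide)
  qed
  also have "\<dots> = ((\<Sum>k<m. ?b k k) * (\<Sum>k<m. ?b k k) + (\<Sum>k<m. \<Sum>l<m. ?b k l * ?b l k)) / ?D"
    by (simp only: sum_divide_distrib[symmetric] sum_quartic_pairings finite_lessThan)
  finally show ?thesis by (simp add: trace_proj_mult basis_entry_def)
qed

lemma Im_quadratic_form_self_adjoint: "cadj B = B \<Longrightarrow> Im (cinner x (B *v x)) = 0"
  by (metis cinner_adj cinner_cnj Reals_cnj_iff complex_is_Real_iff)

lemma basis_entry_self_adjoint: "cadj B = B \<Longrightarrow> basis_entry B l k = cnj (basis_entry B k l)"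
  unfolding basis_entry_def by (metis cinner_adj cinner_cnj)

lemma sum_sq_basis_entry_le:
  assumes "\<And>x. norm (B *v x) \<le> norm x"
  shows "(\<Sum>k<m. \<Sum>l<m. (cmod (basis_entry B k l))\<^sup>2) \<le> real m"
proof -
  have "(\<Sum>k<m. \<Sum>l<m. (cmod (basis_entry B k l))\<^sup>2) =
          (\<Sum>l<m. \<Sum>k<m. (cmod (cinner (e k) (B *v e l)))\<^sup>2)"
    unfolding basis_entry_def by (rule sum.swap)
  also have "\<dots> \<le> (\<Sum>l<m. (norm (B *v e l))\<^sup>2)"
    by (intro sum_mono bessel_inequality)
  also have "\<dots> \<le> (\<Sum>l<m. 1)"
    by (intro sum_mono) (metis assms lessThan_iff norm_basis norm_ge_zero power_le_one)
  finally show ?thesis by simp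
qed

lemma integral_Re_quadratic_form:
  "(\<integral>x. Re (cinner x (B *v x)) \<partial>u) = Re (trace (P ** B)) / real m"
  using integral_quadratic_form[of B]
    integral_Re[OF integrable_continuous[OF continuous_on_quadratic_form]]
  by (simp add: Re_divide_of_nat)

lemma mean_quadratic_form_bounds:
  assumes "\<And>x. x \<in> space u \<Longrightarrow> 0 \<le> Re (cinner x (B *v x)) \<and> Re (cinner x (B *v x)) \<le> 1"
  shows "0 \<le> Re (trace (P ** B)) / real m \<and> Re (trace (P ** B)) / real m \<le> 1"
proof -
  have "0 \<le> (\<integral>x. Re (cinner x (B *v x)) \<partial>u)"
    using assms by (intro integral_nonneg_AE AE_I2) auto
  moreover have "(\<integral>x. Re (cinner x (B *v x)) \<partial>u) \<le> (\<integral>x. 1 \<partial>u)"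
    using assms prob_space.axioms(1)[OF prob_space_u]
    by (intro integral_mono integrable_continuous continuous_intros)
       (auto intro: finite_measure.integrable_const)
  ultimately show ?thesis
    using prob_space.prob_space[OF prob_space_u] by (simp add: integral_Re_quadratic_form)
qed

lemma integral_Re_quadratic_form_sq:
  assumes "cadj B = B"
  shows "(\<integral>x. (Re (cinner x (B *v x)))\<^sup>2 \<partial>u) =
           ((Re (trace (P ** B)))\<^sup>2 + (\<Sum>k<m. \<Sum>l<m. (cmod (basis_entry B k l))\<^sup>2)) /
             (real m * (real m + 1))"
proof -
  have "Im (basis_entry B k k) = 0" for k
    using arg_cong[OF basis_entry_self_adjoint[OF assms, of k k], of Im] by simp
  then have Im_trace: "Im (trace (P ** B)) = 0"
    by (simp add: trace_proj_mult basis_entry_def[symmetric] Im_sum)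
  have "(\<Sum>k<m. \<Sum>l<m. basis_entry B k l * basis_entry B l k) =
          of_real (\<Sum>k<m. \<Sum>l<m. (cmod (basis_entry B k l))\<^sup>2)"
    unfolding of_real_sum
    by (intro sum.cong refl, subst (2) basis_entry_self_adjoint[OF assms])
       (metis complex_norm_square of_real_power)
  moreover have "(of_nat m * (of_nat m + 1) :: complex) = of_real (real m * (real m + 1))"
    by simp
  ultimately have "(\<integral>x. cinner x (B *v x) * cinner x (B *v x) \<partial>u) =
          of_real (((Re (trace (P ** B)))\<^sup>2 + (\<Sum>k<m. \<Sum>l<m. (cmod (basis_entry B k l))\<^sup>2)) /
                   (real m * (real m + 1)))"
    unfolding integral_quadratic_form_sq using Im_trace
    by (simp add: complex_eq_iff power2_eq_square)
  moreover have "(\<integral>x. (Re (cinner x (B *v x)))\<^sup>2 \<partial>u) =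
                   Re (\<integral>x. cinner x (B *v x) * cinner x (B *v x) \<partial>u)"
    using Im_quadratic_form_self_adjoint[OF assms] integral_Re[OF integrable_continuous,
        of "\<lambda>x. cinner x (B *v x) * cinner x (B *v x)"]
    by (simp add: power2_eq_square continuous_intros)
  ultimately show ?thesis by simp
qed

lemma variance_quadratic_form_le:
  assumes "cadj B = B" and "\<And>x. norm (B *v x) \<le> norm x"
  shows "(\<integral>x. (Re (cinner x (B *v x)) - Re (trace (P ** B)) / real m)\<^sup>2 \<partial>u) \<le> 1 / (real m + 1)"
proof -
  let ?t = "Re (trace (P ** B))" and ?S = "\<Sum>k<m. \<Sum>l<m. (cmod (basis_entry B k l))\<^sup>2"
  have m: "0 < real m" using basis_length_pos[OF nonzero] by simp
  have "(\<integral>x. (Re (cinner x (B *v x)) - ?t / real m)\<^sup>2 \<partial>u) =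
          (\<integral>x. (Re (cinner x (B *v x)))\<^sup>2 \<partial>u) - (?t / real m)\<^sup>2"
  proof -
    have "integrable u (\<lambda>x. Re (cinner x (B *v x)))"
      "integrable u (\<lambda>x. (Re (cinner x (B *v x)))\<^sup>2)"
      by (auto intro!: integrable_continuous continuous_intros)
    from prob_space.variance_eq[OF prob_space_u this] show ?thesis
      by (simp add: integral_Re_quadratic_form)
  qed
  also have "\<dots> = (?t\<^sup>2 + ?S) / (real m * (real m + 1)) - ?t\<^sup>2 / (real m * real m)"
    unfolding integral_Re_quadratic_form_sq[OF assms(1)] by (simp add: power2_eq_square)
  also have "\<dots> \<le> ?S / (real m * (real m + 1))"
  proof -
    have "?t\<^sup>2 / (real m * (real m + 1)) \<le> ?t\<^sup>2 / (real m * real m)"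
      using m by (intro divide_left_mono) auto
    then show ?thesis by (simp add: add_divide_distrib)
  qed
  also have "\<dots> \<le> real m / (real m * (real m + 1))"
    using m by (intro divide_right_mono sum_sq_basis_entry_le assms(2)) simp
  also have "\<dots> = 1 / (real m + 1)" using m by simp
  finally show ?thesis .
qed

end

section \<open>Concentration\<close>

lemma (in prob_space) prob_le_ge_by_Markov:
  fixes f :: "'a \<Rightarrow> real"
  assumes f: "integrable M f" "AE x in M. 0 \<le> f x" and c: "0 < c" and Ef: "expectation f \<le> \<epsilon> * c"
  shows "prob {x \<in> space M. f x \<le> c} \<ge> 1 - \<epsilon>"
proof -
  have [measurable]: "f \<in> borel_measurable M" using f(1) by blast
  have "prob {x \<in> space M. c < f x} \<le> prob {x \<in> space M. c \<le> f x}"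
    by (intro finite_measure_mono) auto
  also have "\<dots> \<le> expectation f / c"
    by (rule integral_Markov_inequality_measure[OF f(1) _ f(2) c]) measurable
  also have "\<dots> \<le> \<epsilon>" using c Ef by (simp add: divide_le_eq)
  finally have "prob {x \<in> space M. c < f x} \<le> \<epsilon>" .
  moreover have "{x \<in> space M. f x \<le> c} = space M - {x \<in> space M. c < f x}" by auto
  then have "prob {x \<in> space M. f x \<le> c} = 1 - prob {x \<in> space M. c < f x}"
    by (simp add: prob_compl)
  ultimately show ?thesis by simp
qed

context uniform_on_range
begin

lemma most_if_integral_le:
  fixes f :: "complex^'n \<Rightarrow> real"
  assumes "continuous_on UNIV f" "\<And>x. 0 \<le> f x" "(\<integral>x. f x \<partial>u) \<le> \<epsilon> * c" "0 < c"
  shows "most u \<epsilon> (\<lambda>x. f x \<le> c)"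
proof -
  have [measurable]: "f \<in> borel_measurable u" by (rule borel_measurable_continuous[OF assms(1)])
  have "{x \<in> space u. f x \<le> c} \<in> sets u" by measurable
  then show ?thesis
    unfolding most_def
    using prob_space.prob_le_ge_by_Markov[OF prob_space_u integrable_continuous[OF assms(1)] _ assms(4,3)]
      assms(2)
    by simp
qed

lemma most_quadratic_form_near_mean:
  assumes "cadj B = B" "\<And>x. norm (B *v x) \<le> norm x" "0 < \<epsilon>"
  shows "most u \<epsilon> (\<lambda>x. \<bar>Re (cinner x (B *v x)) - Re (trace (P ** B)) / real m\<bar> \<le> 1 / sqrt (\<epsilon> * real m))"
proof -
  let ?X = "\<lambda>x. Re (cinner x (B *v x)) - Re (trace (P ** B)) / real m"
  have m: "0 < real m" using basis_length_pos[OF nonzero] by simp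
  have "most u \<epsilon> (\<lambda>x. (?X x)\<^sup>2 \<le> 1 / (\<epsilon> * real m))"
  proof (rule most_if_integral_le)
    have "(\<integral>x. (?X x)\<^sup>2 \<partial>u) \<le> 1 / (real m + 1)"
      by (rule variance_quadratic_form_le[OF assms(1,2)])
    also have "\<dots> \<le> \<epsilon> * (1 / (\<epsilon> * real m))"
      using m assms(3) by (simp add: field_simps)
    finally show "(\<integral>x. (?X x)\<^sup>2 \<partial>u) \<le> \<epsilon> * (1 / (\<epsilon> * real m))" .
  qed (use m assms(3) in \<open>auto intro!: continuous_intros\<close>)
  moreover have "(?X x)\<^sup>2 \<le> 1 / (\<epsilon> * real m) \<longleftrightarrow> \<bar>?X x\<bar> \<le> 1 / sqrt (\<epsilon> * real m)" for x
  proof -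
    have "\<bar>?X x\<bar> \<le> 1 / sqrt (\<epsilon> * real m) \<longleftrightarrow> \<bar>?X x\<bar> \<le> \<bar>1 / sqrt (\<epsilon> * real m)\<bar>"
      using m assms(3) by simp
    also have "\<dots> \<longleftrightarrow> (?X x)\<^sup>2 \<le> (1 / sqrt (\<epsilon> * real m))\<^sup>2" by (rule abs_le_square_iff)
    also have "(1 / sqrt (\<epsilon> * real m))\<^sup>2 = 1 / (\<epsilon> * real m)"
      using m assms(3) by (simp add: power_divide)
    finally show ?thesis by simp
  qed
  ultimately show ?thesis unfolding most_def by simp
qed

end

section \<open>Exchanging the time average and the expectation\<close>

text \<open>For separable integrands the time integral and the expectation commute by linearity
  alone, so no Fubini theorem is needed.\<close>

inductive separable :: "(real \<Rightarrow> 'x::topological_space \<Rightarrow> real) \<Rightarrow> bool" where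
  product: "continuous_on UNIV a \<Longrightarrow> continuous_on UNIV b \<Longrightarrow> (\<And>t x. f t x = a t * b x) \<Longrightarrow>
    separable f"
| add: "separable f \<Longrightarrow> separable g \<Longrightarrow> (\<And>t x. h t x = f t x + g t x) \<Longrightarrow> separable h"

lemma separable_mult_product:
  assumes "separable f" "continuous_on UNIV a" "continuous_on UNIV b"
  shows "separable (\<lambda>t x. f t x * (a t * b x))"
  using assms
proof (induction arbitrary: a b rule: separable.induct)
  case (product a' b' f)
  show ?case
    by (rule separable.product[of "\<lambda>t. a' t * a t" "\<lambda>x. b' x * b x"])
       (use product in \<open>auto intro!: continuous_intros simp: mult_ac\<close>)
next
  case (add f g h)
  show ?case
    by (rule separable.add[OF add.IH(1)[OF add.prems] add.IH(2)[OF add.prems]])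
       (simp add: add.hyps(3) distrib_right)
qed

lemma separable_mult:
  assumes "separable f" "separable g" shows "separable (\<lambda>t x. f t x * g t x)"
  using assms(2)
proof (induction rule: separable.induct)
  case (product a b g)
  show ?case using separable_mult_product[OF assms(1) product(1,2)] product(3) by simp
next
  case (add g1 g2 h)
  show ?case by (rule separable.add[OF add.IH]) (simp add: add.hyps(3) distrib_left)
qed

lemma separable_time_only: "continuous_on UNIV a \<Longrightarrow> separable (\<lambda>t x. a t)"
  by (rule separable.product[of a "\<lambda>x. 1"]) auto

lemma separable_add: "separable f \<Longrightarrow> separable g \<Longrightarrow> separable (\<lambda>t x. f t x + g t x)"
  by (rule separable.add) auto

lemma separable_diff:
  assumes "separable f" "separable g" shows "separable (\<lambda>t x. f t x - g t x)"
proof -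
  have "separable (\<lambda>t x. g t x * (- 1))"
    using separable_mult[OF assms(2) separable_time_only[of "\<lambda>t. -1"]] by simp
  then show ?thesis by (rule separable.add[OF assms(1)]) simp
qed

lemma separable_sum:
  "finite I \<Longrightarrow> (\<And>i. i \<in> I \<Longrightarrow> separable (f i)) \<Longrightarrow> separable (\<lambda>t x. \<Sum>i\<in>I. f i t x)"
proof (induction I rule: finite_induct)
  case empty
  then show ?case using separable_time_only[of "\<lambda>t. 0"] by simp
next
  case (insert i I)
  then show ?case by (simp add: separable_add)
qed

lemma separable_continuous_on: "separable f \<Longrightarrow> continuous_on UNIV (f t)"
proof (induction rule: separable.induct)
  case (product a b f)
  then show ?case by (simp add: product(3)[abs_def] continuous_intros)
next
  case (add f g h)
  then show ?case by (simp add: add(3)[abs_def] continuous_intros)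
qed

lemma separable_integrable_on: "separable f \<Longrightarrow> (\<lambda>t. f t x) integrable_on {0..T}"
proof (induction rule: separable.induct)
  case (product a b f)
  have "a integrable_on {0..T}"
    by (rule integrable_continuous_interval) (use product in \<open>auto intro: continuous_on_subset\<close>)
  then show ?case unfolding product(3) by (rule integrable_on_mult_left)
next
  case (add f g h)
  show ?case unfolding add(3) by (rule integrable_add[OF add.IH])
qed

lemma separable_continuous_on_integral:
  "separable f \<Longrightarrow> continuous_on UNIV (\<lambda>x. integral {0..T} (\<lambda>t. f t x))"
proof (induction rule: separable.induct)
  case (product a b f)
  then show ?case by (simp add: continuous_intros)
next
  case (add f g h)
  have "integral {0..T} (\<lambda>t. h t x) = integral {0..T} (\<lambda>t. f t x) + integral {0..T} (\<lambda>t. g t x)" for x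
    unfolding add(3) by (rule integral_add[OF separable_integrable_on[OF add(1)]
          separable_integrable_on[OF add(2)]])
  then show ?case using add by (simp add: continuous_intros)
qed

lemma separable_Re_quadratic_form:
  assumes "continuous_matrix_fun B"
  shows "separable (\<lambda>t x. Re (cinner x (B t *v x)))"
proof -
  have "Re (cinner x (B t *v x)) =
          (\<Sum>i\<in>UNIV. \<Sum>j\<in>UNIV. Re (B t $ i $ j) * Re (cnj (x $ i) * x $ j) -
                                 Im (B t $ i $ j) * Im (cnj (x $ i) * x $ j))" for t x
    by (simp add: cinner_def matrix_vector_mult_def sum_distrib_left Re_sum algebra_simps)
  moreover have "continuous_on UNIV (\<lambda>t. Re (B t $ i $ j))" "continuous_on UNIV (\<lambda>t. Im (B t $ i $ j))"
    for i j
    using assms unfolding continuous_matrix_fun_def by (auto intro: continuous_intros)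
  then have "separable (\<lambda>t x. \<Sum>i\<in>UNIV. \<Sum>j\<in>UNIV.
      Re (B t $ i $ j) * Re (cnj (x $ i) * x $ j) - Im (B t $ i $ j) * Im (cnj (x $ i) * x $ j))"
    by (intro separable_sum separable_diff finite_UNIV separable.product) (auto intro!: continuous_intros)
  ultimately show ?thesis by simp
qed

context uniform_on_range
begin

lemma integral_swap_separable:
  assumes "separable f"
  shows "(\<lambda>t. \<integral>x. f t x \<partial>u) integrable_on {0..T} \<and>
    (\<integral>x. integral {0..T} (\<lambda>t. f t x) \<partial>u) = integral {0..T} (\<lambda>t. \<integral>x. f t x \<partial>u)"
  using assms
proof (induction rule: separable.induct)
  case (product a b f)
  have "a integrable_on {0..T}"
    by (rule integrable_continuous_interval) (use product in \<open>auto intro: continuous_on_subset\<close>)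
  then show ?case unfolding product(3) by (simp add: integrable_on_mult_left)
next
  case (add f g h)
  have "integrable u (\<lambda>x. integral {0..T} (\<lambda>t. f t x))"
    "integrable u (\<lambda>x. integral {0..T} (\<lambda>t. g t x))"
    by (intro integrable_continuous separable_continuous_on_integral add.hyps)+
  moreover have "integrable u (f t)" "integrable u (g t)" for t
    by (intro integrable_continuous separable_continuous_on add.hyps)+
  ultimately show ?case
    using add.IH unfolding add.hyps(3)
    by (simp add: integral_add separable_integrable_on add.hyps integrable_add)
qed

lemma most_time_average_near_mean:
  assumes B: "continuous_matrix_fun B" "\<And>t. cadj (B t) = B t" "\<And>t x. norm (B t *v x) \<le> norm x"
    and "0 < T" "0 < \<epsilon>"
  shows "most u \<epsilon> (\<lambda>x. (1 / T) * integral {0..T}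
           (\<lambda>t. \<bar>Re (cinner x (B t *v x)) - Re (trace (P ** B t)) / real m\<bar>\<^sup>2) \<le> 1 / (\<epsilon> * real m))"
proof -
  define G where "G = (\<lambda>t x. (Re (cinner x (B t *v x)) - Re (trace (P ** B t)) / real m) *
                            (Re (cinner x (B t *v x)) - Re (trace (P ** B t)) / real m))"
  have m: "0 < real m" using basis_length_pos[OF nonzero] by simp
  have "continuous_on UNIV (\<lambda>t. Re (trace (P ** B t)) / real m)"
    using m by (intro continuous_intros continuous_on_trace continuous_matrix_fun_mult
        continuous_matrix_fun_const B(1)) auto
  then have G: "separable G" unfolding G_def
    by (intro separable_mult separable_diff separable_Re_quadratic_form separable_time_only B(1))
  have "(\<integral>x. (1 / T) * integral {0..T} (\<lambda>t. G t x) \<partial>u) =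
          (1 / T) * integral {0..T} (\<lambda>t. \<integral>x. G t x \<partial>u)"
    using integral_swap_separable[OF G] by simp
  also have "\<dots> \<le> (1 / T) * integral {0..T} (\<lambda>t. 1 / (real m + 1))"
    using integral_swap_separable[OF G] variance_quadratic_form_le[OF B(2,3)] \<open>0 < T\<close>
    by (intro mult_left_mono integral_le) (auto simp: G_def power2_eq_square)
  also have "\<dots> \<le> \<epsilon> * (1 / (\<epsilon> * real m))"
    using \<open>0 < T\<close> \<open>0 < \<epsilon>\<close> m by (simp add: field_simps)
  finally have "most u \<epsilon> (\<lambda>x. (1 / T) * integral {0..T} (\<lambda>t. G t x) \<le> 1 / (\<epsilon> * real m))"
    using \<open>0 < T\<close> \<open>0 < \<epsilon>\<close> m
    by (intro most_if_integral_le continuous_intros separable_continuous_on_integral G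
        mult_nonneg_nonneg integral_nonneg separable_integrable_on) (auto simp: G_def)
  then show ?thesis unfolding G_def by (simp add: power2_eq_square)
qed

end

section \<open>The Heisenberg picture\<close>

definition heisenberg :: "complex^'n^'n \<Rightarrow> complex^'n^'n \<Rightarrow> real \<Rightarrow> complex^'n^'n" where
  "heisenberg H Q t = cexpm (\<i> * of_real t) H ** Q ** cexpm (- \<i> * of_real t) H"

lemma continuous_matrix_fun_heisenberg: "continuous_matrix_fun (heisenberg H Q)"
  unfolding heisenberg_def
  by (intro continuous_matrix_fun_mult continuous_matrix_fun_const continuous_matrix_fun_cexpm)

lemma wfun_eq_trace_heisenberg:
  "wfun H P Q t = Re (trace (P ** heisenberg H Q t)) / real (cdim (subsp P))"
  unfolding wfun_def heisenberg_def by (simp add: matrix_mul_assoc)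

context projection
begin

lemma uniform_on_range_exists:
  assumes "uniform_sphere_measure (subsp P) u" "P \<noteq> 0"
  obtains e m where "uniform_on_range P e m u" "cdim (subsp P) = m"
proof -
  obtain e m where e: "\<forall>k<m. e k \<in> subsp P" "orthonormal_upto e m"
    "\<forall>x\<in>subsp P. x = (\<Sum>k<m. cinner (e k) x *s e k)"
    by (rule orthonormal_basis_exists[OF subspace_subsp])
  have "P *v e k = e k" if "k < m" for k
    using e(1) that by (simp add: mem_subsp_iff)
  moreover have "x = (\<Sum>k<m. cinner (e k) x *s e k)" if "P *v x = x" for x
    by (rule bspec[OF e(3)]) (simp add: mem_subsp_iff that)
  ultimately have "uniform_on_range P e m u"
    using e(2) assms by unfold_locales
  moreover have "cdim (subsp P) = m"
    unfolding cdim_def by (rule dim_eq_orthonormal_basis_length[OF e])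
  ultimately show thesis by (rule that)
qed

context
  fixes H :: "complex^'n^'n" assumes H: "self_adjoint H"
begin

lemma heisenberg_apply:
  "heisenberg H P t *v x = cadj (cexpm (- \<i> * of_real t) H) *v (P *v (cexpm (- \<i> * of_real t) H *v x))"
  unfolding heisenberg_def cadj_cexpm[OF H] by (simp add: matrix_vector_mul_assoc matrix_mul_assoc)

lemma self_adjoint_heisenberg: "cadj (heisenberg H P t) = heisenberg H P t"
  unfolding heisenberg_def by (simp add: cadj_mult cadj_cexpm[OF H] self_adj matrix_mul_assoc)

lemma norm_heisenberg_le: "norm (heisenberg H P t *v x) \<le> norm x"
proof -
  let ?U = "cexpm (- \<i> * of_real t) H"
  have "cadj ?U = cexpm (- \<i> * of_real (- t)) H" by (simp add: cadj_cexpm[OF H])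
  then have "unitary (cadj ?U)" using unitary_cexpm_imaginary[OF H, of "- t"] by simp
  then have "norm (heisenberg H P t *v x) = norm (P *v (?U *v x))"
    unfolding heisenberg_apply by (rule unitary_norm_preserving)
  also have "\<dots> \<le> norm (?U *v x)" by (rule norm_proj_le)
  also have "\<dots> = norm x" by (rule unitary_norm_preserving[OF unitary_cexpm_imaginary[OF H]])
  finally show ?thesis .
qed

lemma norm_proj_evol_sq: "(norm (P *v evol H t x))\<^sup>2 = Re (cinner x (heisenberg H P t *v x))"
proof -
  let ?U = "cexpm (- \<i> * of_real t) H"
  have "cinner x (heisenberg H P t *v x) = cinner (?U *v x) (P *v (?U *v x))"
    unfolding heisenberg_apply using cinner_adj[of x "cadj ?U"] by simp
  then show ?thesis unfolding evol_def norm_proj_sq_eq_cinner by simp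
qed


lemma Re_quadratic_form_heisenberg_bounds:
  assumes "norm x = 1"
  shows "0 \<le> Re (cinner x (heisenberg H P t *v x)) \<and> Re (cinner x (heisenberg H P t *v x)) \<le> 1"
proof -
  have "norm (P *v evol H t x) \<le> norm (evol H t x)" by (rule norm_proj_le)
  also have "\<dots> = 1"
    using assms unitary_norm_preserving[OF unitary_cexpm_imaginary[OF H]] by (simp add: evol_def)
  finally show ?thesis unfolding norm_proj_evol_sq[symmetric] by (simp add: power_le_one)
qed
end

end

theorem theorem1:
  fixes Ms :: "'m set" and P :: "'m \<Rightarrow> complex^'n^'n" and H :: "complex^'n^'n"
    and \<mu> \<nu> :: 'm and u :: "(complex^'n) measure"
  assumes "macro_decomposition Ms P"
    and "self_adjoint H"
    and "\<mu> \<in> Ms" and "\<nu> \<in> Ms"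
    and "uniform_sphere_measure (subsp (P \<mu>)) u"
  defines "d \<equiv> real (cdim (subsp (P \<mu>)))"
    and "w \<equiv> wfun H (P \<mu>) (P \<nu>)"
  shows "(\<forall>t. 0 \<le> w t \<and> w t \<le> 1)
    \<and> (\<forall>t. \<forall>\<epsilon>>0. most u \<epsilon> (\<lambda>\<psi>0.
          \<bar>(norm (P \<nu> *v evol H t \<psi>0))\<^sup>2 - w t\<bar> \<le> 1 / sqrt (\<epsilon> * d)))
    \<and> (\<forall>T>0. \<forall>\<epsilon>>0. most u \<epsilon> (\<lambda>\<psi>0.
          (1 / T) * integral {0..T} (\<lambda>t. \<bar>(norm (P \<nu> *v evol H t \<psi>0))\<^sup>2 - w t\<bar>\<^sup>2)
            \<le> 1 / (\<epsilon> * d)))"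
proof -
  interpret P\<mu>: projection "P \<mu>" using assms(1,3) by unfold_locales (auto simp: macro_decomposition_def)
  interpret P\<nu>: projection "P \<nu>" using assms(1,4) by unfold_locales (auto simp: macro_decomposition_def)
  have "P \<mu> \<noteq> 0" using assms(1,3) unfolding macro_decomposition_def by blast
  then obtain e m where "uniform_on_range (P \<mu>) e m u" and d: "cdim (subsp (P \<mu>)) = m"
    using P\<mu>.uniform_on_range_exists[OF assms(5)] by blast
  then interpret uniform_on_range "P \<mu>" e m u by simp
  let ?B = "heisenberg H (P \<nu>)"
  have w: "w t = Re (trace (P \<mu> ** ?B t)) / real m" for t
    unfolding w_def wfun_eq_trace_heisenberg d ..
  have bounds: "0 \<le> Re (cinner x (?B t *v x)) \<and> Re (cinner x (?B t *v x)) \<le> 1"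
    if "x \<in> space u" for t x
    using that P\<nu>.Re_quadratic_form_heisenberg_bounds[OF assms(2)] by (simp add: space_u)
  show ?thesis
    unfolding w d_def d P\<nu>.norm_proj_evol_sq[OF assms(2)]
    using mean_quadratic_form_bounds[OF bounds] most_quadratic_form_near_mean
      most_time_average_near_mean P\<nu>.self_adjoint_heisenberg[OF assms(2)]
      P\<nu>.norm_heisenberg_le[OF assms(2)] continuous_matrix_fun_heisenberg
    by blast
qed

end
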